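(* Let $R$ be a commutative ring with identity. Then: (1) If $M$ is a coprime $R$-module and $N$ is any $R$-module, then $\operatorname{Hom}_R(M,N)$ is a prime $R$-module. Conversely, if $N$ is an injective cogenerator and $\operatorname{Hom}_R(M,N)$ is prime, then $M$ is coprime. (2) If $R$ is Noetherian, $N$ is an injective cogenerator $R$-module and $M$ is a prime $R$-module, then $\operatorname{Hom}_R(M,N)$ is a coprime $R$-module. (3) If $M$ is a prime (resp. weakly prime, coprime, weakly coprime) $R$-module, then for every prime ideal $\mathcal P$ of $R$ the $R_{\mathcal P}$-module $M_{\mathcal P}$ is prime (resp. weakly prime, coprime, weakly coprime). (4) An injective cogenerator $R$-module which is reduced (resp. weakly prime) is coreduced (resp. weakly coprime). (5) A progenerator $R$-module which is coreduced (resp. weakly coprime) is reduced (resp. weakly prime).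
   Context: All rings are commutative with identity and modules are unital. An $R$-module $M$ is: prime if for all ideals $I$ of $R$ and all $m\in M$, $Im=0$ implies $m=0$ or $IM=0$; weakly prime if for all ideals $I,J$ of $R$ and $m\in M$, $IJm=0$ implies $Im=0$ or $Jm=0$; reduced if for all ideals $I$ and $m\in M$, $I^2m=0$ implies $Im=0$; coprime if for all ideals $I$ of $R$, $IM=0$ or $IM=M$; weakly coprime if for all ideals $I,J$ of $R$, $IJM=IM$ or $IJM=JM$; coreduced if $IM=I^2M$ for all ideals $I$. A progenerator is a finitely generated projective generator. *)

theory Defs
  imports "HOL-Algebra.Module" "HOL-Algebra.Ideal_Product" "HOL-Algebra.Ring_Divisibility"
begin

inductive_set gen_submod :: "'a ring \<Rightarrow> ('a, 'm) module \<Rightarrow> 'm set \<Rightarrow> 'm set"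
  for R M X where
    zero: "\<zero>\<^bsub>M\<^esub> \<in> gen_submod R M X"
  | incl: "x \<in> X \<Longrightarrow> x \<in> gen_submod R M X"
  | smult: "\<lbrakk> a \<in> carrier R; x \<in> gen_submod R M X \<rbrakk> \<Longrightarrow> a \<odot>\<^bsub>M\<^esub> x \<in> gen_submod R M X"
  | add: "\<lbrakk> x \<in> gen_submod R M X; y \<in> gen_submod R M X \<rbrakk> \<Longrightarrow> x \<oplus>\<^bsub>M\<^esub> y \<in> gen_submod R M X"

definition ideal_elt :: "'a ring \<Rightarrow> ('a, 'm) module \<Rightarrow> 'a set \<Rightarrow> 'm \<Rightarrow> 'm set" where
  "ideal_elt R M I m = {a \<odot>\<^bsub>M\<^esub> m | a. a \<in> I}"

definition ideal_mod :: "'a ring \<Rightarrow> ('a, 'm) module \<Rightarrow> 'a set \<Rightarrow> 'm set" where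
  "ideal_mod R M I = gen_submod R M {a \<odot>\<^bsub>M\<^esub> m | a m. a \<in> I \<and> m \<in> carrier M}"

definition prime_module :: "'a ring \<Rightarrow> ('a, 'm) module \<Rightarrow> bool" where
  "prime_module R M \<longleftrightarrow> (\<forall>I m. ideal I R \<and> m \<in> carrier M \<and> ideal_elt R M I m = {\<zero>\<^bsub>M\<^esub>}
      \<longrightarrow> m = \<zero>\<^bsub>M\<^esub> \<or> ideal_mod R M I = {\<zero>\<^bsub>M\<^esub>})"

definition weakly_prime_module :: "'a ring \<Rightarrow> ('a, 'm) module \<Rightarrow> bool" where
  "weakly_prime_module R M \<longleftrightarrow> (\<forall>I J m. ideal I R \<and> ideal J R \<and> m \<in> carrier M
      \<and> ideal_elt R M (ideal_prod R I J) m = {\<zero>\<^bsub>M\<^esub>}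
      \<longrightarrow> ideal_elt R M I m = {\<zero>\<^bsub>M\<^esub>} \<or> ideal_elt R M J m = {\<zero>\<^bsub>M\<^esub>})"

definition reduced_module :: "'a ring \<Rightarrow> ('a, 'm) module \<Rightarrow> bool" where
  "reduced_module R M \<longleftrightarrow> (\<forall>I m. ideal I R \<and> m \<in> carrier M
      \<and> ideal_elt R M (ideal_prod R I I) m = {\<zero>\<^bsub>M\<^esub>}
      \<longrightarrow> ideal_elt R M I m = {\<zero>\<^bsub>M\<^esub>})"

definition coprime_module :: "'a ring \<Rightarrow> ('a, 'm) module \<Rightarrow> bool" where
  "coprime_module R M \<longleftrightarrow> (\<forall>I. ideal I R
      \<longrightarrow> ideal_mod R M I = {\<zero>\<^bsub>M\<^esub>} \<or> ideal_mod R M I = carrier M)"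

definition weakly_coprime_module :: "'a ring \<Rightarrow> ('a, 'm) module \<Rightarrow> bool" where
  "weakly_coprime_module R M \<longleftrightarrow> (\<forall>I J. ideal I R \<and> ideal J R
      \<longrightarrow> ideal_mod R M (ideal_prod R I J) = ideal_mod R M I
        \<or> ideal_mod R M (ideal_prod R I J) = ideal_mod R M J)"

definition coreduced_module :: "'a ring \<Rightarrow> ('a, 'm) module \<Rightarrow> bool" where
  "coreduced_module R M \<longleftrightarrow> (\<forall>I. ideal I R
      \<longrightarrow> ideal_mod R M I = ideal_mod R M (ideal_prod R I I))"

definition module_hom :: "'a ring \<Rightarrow> ('a, 'm) module \<Rightarrow> ('a, 'n) module \<Rightarrow> ('m \<Rightarrow> 'n) set" where
  "module_hom R M N = {f. f \<in> carrier M \<rightarrow> carrier N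
      \<and> (\<forall>x \<in> carrier M. \<forall>y \<in> carrier M. f (x \<oplus>\<^bsub>M\<^esub> y) = f x \<oplus>\<^bsub>N\<^esub> f y)
      \<and> (\<forall>a \<in> carrier R. \<forall>x \<in> carrier M. f (a \<odot>\<^bsub>M\<^esub> x) = a \<odot>\<^bsub>N\<^esub> f x)}"

definition hom_module :: "'a ring \<Rightarrow> ('a, 'm) module \<Rightarrow> ('a, 'n) module \<Rightarrow> ('a, 'm \<Rightarrow> 'n) module" where
  "hom_module R M N = \<lparr> carrier = module_hom R M N \<inter> extensional (carrier M),
      monoid.mult = (\<lambda>f g. undefined), one = undefined,
      zero = (\<lambda>x \<in> carrier M. \<zero>\<^bsub>N\<^esub>),
      add = (\<lambda>f g. \<lambda>x \<in> carrier M. f x \<oplus>\<^bsub>N\<^esub> g x),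
      smult = (\<lambda>a f. \<lambda>x \<in> carrier M. a \<odot>\<^bsub>N\<^esub> f x) \<rparr>"

text \<open>HOL cannot quantify over all types inside a formula. The universal properties are
  therefore stated for test modules whose carriers live in the type \<open>'a list set\<close>
  (\<open>'a\<close> the ring type). This type contains isomorphic copies of \<open>R\<close>, all ideals, all
  cyclic modules \<open>R/I\<close>, all \<open>R^n\<close> and their quotients.\<close>

definition injective_module :: "'a ring \<Rightarrow> ('a, 'n) module \<Rightarrow> bool" where
  "injective_module R N \<longleftrightarrow>
    (\<forall>(A :: ('a, 'a list set) module) (B :: ('a, 'a list set) module) f g.
       module R A \<and> module R B \<and> f \<in> module_hom R A B \<and> inj_on f (carrier A)
       \<and> g \<in> module_hom R A N
       \<longrightarrow> (\<exists>h \<in> module_hom R B N. \<forall>x \<in> carrier A. h (f x) = g x))"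

definition cogenerator_module :: "'a ring \<Rightarrow> ('a, 'n) module \<Rightarrow> bool" where
  "cogenerator_module R N \<longleftrightarrow>
    (\<forall>(M :: ('a, 'a list set) module) m.
       module R M \<and> m \<in> carrier M \<and> m \<noteq> \<zero>\<^bsub>M\<^esub>
       \<longrightarrow> (\<exists>f \<in> module_hom R M N. f m \<noteq> \<zero>\<^bsub>N\<^esub>))"

definition projective_module :: "'a ring \<Rightarrow> ('a, 'p) module \<Rightarrow> bool" where
  "projective_module R P \<longleftrightarrow>
    (\<forall>(B :: ('a, 'a list set) module) (C :: ('a, 'a list set) module) g f.
       module R B \<and> module R C \<and> g \<in> module_hom R B C \<and> g ` carrier B = carrier C
       \<and> f \<in> module_hom R P C
       \<longrightarrow> (\<exists>h \<in> module_hom R P B. \<forall>x \<in> carrier P. g (h x) = f x))"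

definition generator_module :: "'a ring \<Rightarrow> ('a, 'p) module \<Rightarrow> bool" where
  "generator_module R P \<longleftrightarrow>
    (\<forall>(M :: ('a, 'a list set) module). module R M \<longrightarrow>
       carrier M = gen_submod R M (\<Union>{f ` carrier P | f. f \<in> module_hom R P M}))"

definition finitely_generated_module :: "'a ring \<Rightarrow> ('a, 'p) module \<Rightarrow> bool" where
  "finitely_generated_module R P \<longleftrightarrow>
    (\<exists>X. finite X \<and> X \<subseteq> carrier P \<and> carrier P = gen_submod R P X)"

definition progenerator_module :: "'a ring \<Rightarrow> ('a, 'p) module \<Rightarrow> bool" where
  "progenerator_module R P \<longleftrightarrow> finitely_generated_module R P \<and> projective_module R P
     \<and> generator_module R P"

text \<open>Equivalence class of the fraction m/s, with (m,s) ~ (n,t) iff u(tm - sn) = 0 for some u in S.\<close>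
definition loc_cls :: "'a ring \<Rightarrow> 'a set \<Rightarrow> ('a, 'm) module \<Rightarrow> 'm \<Rightarrow> 'a \<Rightarrow> ('m \<times> 'a) set" where
  "loc_cls R S M m s = {(n, t). n \<in> carrier M \<and> t \<in> S \<and>
      (\<exists>u \<in> S. u \<odot>\<^bsub>M\<^esub> (t \<odot>\<^bsub>M\<^esub> m \<ominus>\<^bsub>M\<^esub> s \<odot>\<^bsub>M\<^esub> n) = \<zero>\<^bsub>M\<^esub>)}"

definition loc_carrier :: "'a ring \<Rightarrow> 'a set \<Rightarrow> ('a, 'm) module \<Rightarrow> ('m \<times> 'a) set set" where
  "loc_carrier R S M = {loc_cls R S M m s | m s. m \<in> carrier M \<and> s \<in> S}"

definition loc_add :: "'a ring \<Rightarrow> 'a set \<Rightarrow> ('a, 'm) module \<Rightarrow> ('m \<times> 'a) set \<Rightarrow> ('m \<times> 'a) set \<Rightarrow> ('m \<times> 'a) set" where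
  "loc_add R S M X Y = (SOME Z. \<exists>m s n t. (m, s) \<in> X \<and> (n, t) \<in> Y \<and>
      Z = loc_cls R S M (t \<odot>\<^bsub>M\<^esub> m \<oplus>\<^bsub>M\<^esub> s \<odot>\<^bsub>M\<^esub> n) (s \<otimes>\<^bsub>R\<^esub> t))"

definition self_module :: "'a ring \<Rightarrow> ('a, 'a) module" where
  "self_module R = \<lparr> carrier = carrier R, monoid.mult = monoid.mult R, one = \<one>\<^bsub>R\<^esub>,
      zero = \<zero>\<^bsub>R\<^esub>, add = add R, smult = monoid.mult R \<rparr>"

definition loc_ring :: "'a ring \<Rightarrow> 'a set \<Rightarrow> ('a \<times> 'a) set ring" where
  "loc_ring R S = \<lparr> carrier = loc_carrier R S (self_module R),
      monoid.mult = (\<lambda>X Y. SOME Z. \<exists>a s b t. (a, s) \<in> X \<and> (b, t) \<in> Y \<and>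
          Z = loc_cls R S (self_module R) (a \<otimes>\<^bsub>R\<^esub> b) (s \<otimes>\<^bsub>R\<^esub> t)),
      one = loc_cls R S (self_module R) \<one>\<^bsub>R\<^esub> \<one>\<^bsub>R\<^esub>,
      zero = loc_cls R S (self_module R) \<zero>\<^bsub>R\<^esub> \<one>\<^bsub>R\<^esub>,
      add = loc_add R S (self_module R) \<rparr>"

definition loc_module :: "'a ring \<Rightarrow> 'a set \<Rightarrow> ('a, 'm) module \<Rightarrow> (('a \<times> 'a) set, ('m \<times> 'a) set) module" where
  "loc_module R S M = \<lparr> carrier = loc_carrier R S M,
      monoid.mult = (\<lambda>X Y. undefined), one = undefined,
      zero = loc_cls R S M \<zero>\<^bsub>M\<^esub> \<one>\<^bsub>R\<^esub>,
      add = loc_add R S M,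
      smult = (\<lambda>A X. SOME Z. \<exists>a s m t. (a, s) \<in> A \<and> (m, t) \<in> X \<and>
          Z = loc_cls R S M (a \<odot>\<^bsub>M\<^esub> m) (s \<otimes>\<^bsub>R\<^esub> t)) \<rparr>"

abbreviation loc_ring_at :: "'a ring \<Rightarrow> 'a set \<Rightarrow> ('a \<times> 'a) set ring" where
  "loc_ring_at R P \<equiv> loc_ring R (carrier R - P)"

abbreviation loc_module_at :: "'a ring \<Rightarrow> 'a set \<Rightarrow> ('a, 'm) module \<Rightarrow> (('a \<times> 'a) set, ('m \<times> 'a) set) module" where
  "loc_module_at R P M \<equiv> loc_module R (carrier R - P) M"

end

theory Submission
  imports Defs
begin

(* Everything is a statement about annihilators.  If M is coprime, then IM is 0 or M, so either
   I kills Hom_R(M, N) or every homomorphism killed by I vanishes on IM = M.  An injective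
   cogenerator N separates points from submodules, so I kills Hom_R(M, N) iff I kills M; and an
   element a acting injectively on M acts surjectively on Hom_R(M, N), because a x |-> f x extends
   from aM to M.  Every ideal of a localization is the extension of its contraction, and
   localization commutes with forming IM.  A reduced cogenerator forces every a into R a^2, hence
   IJ = I whenever I is contained in J, and a weakly prime one forces the ideals into a chain;
   dually, a generator Q detects ideals: IQ contained in JQ forces I contained in J, as one sees by
   mapping Q to R/J.
   Injective modules and cogenerators are defined through test modules carried by 'a list set;
   Baer's criterion, proved with Zorn's lemma, extends injectivity to modules of arbitrary type. *)

text \<open>The definitions above are stated for ring records, not ring schemes; these locales fix the
  types accordingly.\<close>
locale cring_rec = cring R for R :: "'a ring" (structure)

locale module_rec = module R M for R :: "'a ring" (structure) and M :: "('a, 'm) module" (structure)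

sublocale module_rec \<subseteq> cring_rec
  by unfold_locales

lemma module_recI: "module R M \<Longrightarrow> module_rec R M"
  by (simp add: module_rec_def)

lemma (in abelian_group) add_eq_add_iff_minus_eq:
  assumes "x \<in> carrier G" "p \<in> carrier G" "y \<in> carrier G" "q \<in> carrier G"
  shows "x \<oplus> p = y \<oplus> q \<longleftrightarrow> y \<ominus> x = p \<ominus> q"
  by (smt (verit, del_insts) a_closed a_lcomm a_transpose_inv add.l_inv_ex
      assms local.minus_minus minus_eq minus_equality)

lemma (in module) smult_minus_distr:
  "\<lbrakk>a \<in> carrier R; b \<in> carrier R; x \<in> carrier M\<rbrakk> \<Longrightarrow> (a \<ominus> b) \<odot>\<^bsub>M\<^esub> x = a \<odot>\<^bsub>M\<^esub> x \<ominus>\<^bsub>M\<^esub> b \<odot>\<^bsub>M\<^esub> x"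
  by (simp add: a_minus_def minus_eq smult_l_distr smult_l_minus)

lemma (in module) smult_comm:
  "\<lbrakk>a \<in> carrier R; b \<in> carrier R; x \<in> carrier M\<rbrakk> \<Longrightarrow> a \<odot>\<^bsub>M\<^esub> (b \<odot>\<^bsub>M\<^esub> x) = b \<odot>\<^bsub>M\<^esub> (a \<odot>\<^bsub>M\<^esub> x)"
  by (metis smult_assoc1 R.m_comm)

lemma (in abelian_group) minus_eq_zero_iff:
  "x \<in> carrier G \<Longrightarrow> y \<in> carrier G \<Longrightarrow> x \<ominus> y = \<zero> \<longleftrightarrow> x = y"
  by (metis a_minus_def add.inv_closed minus_equality r_neg)

lemma (in module) submoduleI_smult:
  assumes "H \<subseteq> carrier M" "\<zero>\<^bsub>M\<^esub> \<in> H"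
    and "\<And>x y. x \<in> H \<Longrightarrow> y \<in> H \<Longrightarrow> x \<oplus>\<^bsub>M\<^esub> y \<in> H"
    and "\<And>a x. a \<in> carrier R \<Longrightarrow> x \<in> H \<Longrightarrow> a \<odot>\<^bsub>M\<^esub> x \<in> H"
  shows "submodule H R M"
proof (rule submoduleI)
  show "\<ominus>\<^bsub>M\<^esub> x \<in> H" if "x \<in> H" for x
    using assms(4)[of "\<ominus> \<one>" x] assms(1) that by (auto simp: smult_l_minus)
qed (fact assms)+

lemma (in module) submodule_zero_closed: "submodule H R M \<Longrightarrow> \<zero>\<^bsub>M\<^esub> \<in> H"
  using subgroup.one_closed[OF submodule.axioms(1)] by fastforce

lemma (in module) zero_submodule: "submodule {\<zero>\<^bsub>M\<^esub>} R M"
  by (rule submoduleI_smult) simp_all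

lemma (in module_rec) is_module: "module R M"
  by unfold_locales

lemma (in cring) idealI_smult:
  assumes "I \<subseteq> carrier R" "\<zero> \<in> I" "\<And>a b. a \<in> I \<Longrightarrow> b \<in> I \<Longrightarrow> a \<oplus> b \<in> I"
    and "\<And>a x. a \<in> I \<Longrightarrow> x \<in> carrier R \<Longrightarrow> x \<otimes> a \<in> I"
  shows "ideal I R"
proof (rule idealI)
  show "subgroup I (add_monoid R)"
  proof (rule subgroup.intro)
    show "inv\<^bsub>add_monoid R\<^esub> a \<in> I" if a: "a \<in> I" for a
    proof -
      have "(\<ominus> \<one>) \<otimes> a \<in> I" using assms(4)[OF a] by simp
      then have "\<ominus> a \<in> I" using a assms(1) by (simp add: l_minus subset_iff)
      then show ?thesis by (simp add: a_inv_def)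
    qed
  qed (use assms in auto)
  show "a \<otimes> x \<in> I" if "a \<in> I" "x \<in> carrier R" for a x
    using assms(4)[OF that] that assms(1) by (simp add: m_comm subset_iff)
qed (use assms in \<open>auto simp: ring_axioms\<close>)

lemma (in module_rec) colon_ideal:
  assumes "submodule U R M" "b \<in> carrier M"
  shows "ideal {r \<in> carrier R. r \<odot>\<^bsub>M\<^esub> b \<in> U} R"
proof (rule idealI_smult)
  show "\<zero> \<in> {r \<in> carrier R. r \<odot>\<^bsub>M\<^esub> b \<in> U}"
    using submodule_zero_closed[OF assms(1)] assms(2) by simp
qed (use submoduleE[OF assms(1)] assms(2) in \<open>auto simp: smult_l_distr smult_assoc1\<close>)

section \<open>Generated submodules, \<open>I m\<close> and \<open>I M\<close>\<close>

lemma gen_submod_mono: "X \<subseteq> Y \<Longrightarrow> gen_submod R M X \<subseteq> gen_submod R M Y"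
proof
  fix x assume "X \<subseteq> Y" and "x \<in> gen_submod R M X"
  from this(2) show "x \<in> gen_submod R M Y"
    by induction (use \<open>X \<subseteq> Y\<close> in \<open>auto intro: gen_submod.intros\<close>)
qed

lemma gen_submod_least:
  assumes "\<zero>\<^bsub>M\<^esub> \<in> S" "X \<subseteq> S" "\<And>a x. a \<in> carrier R \<Longrightarrow> x \<in> S \<Longrightarrow> a \<odot>\<^bsub>M\<^esub> x \<in> S"
    "\<And>x y. x \<in> S \<Longrightarrow> y \<in> S \<Longrightarrow> x \<oplus>\<^bsub>M\<^esub> y \<in> S"
  shows "gen_submod R M X \<subseteq> S"
proof
  fix x assume "x \<in> gen_submod R M X"
  then show "x \<in> S" by induction (use assms in auto)
qed

lemma (in module_rec) gen_submod_submodule: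
  "X \<subseteq> carrier M \<Longrightarrow> submodule (gen_submod R M X) R M"
proof (rule submoduleI_smult)
  assume "X \<subseteq> carrier M"
  then show "gen_submod R M X \<subseteq> carrier M"
    by (intro gen_submod_least) auto
qed (auto intro: gen_submod.intros)

lemma (in module_rec) gen_submod_annihilated:
  assumes a: "a \<in> carrier R" and X: "X \<subseteq> carrier M" "\<And>x. x \<in> X \<Longrightarrow> a \<odot>\<^bsub>M\<^esub> x = \<zero>\<^bsub>M\<^esub>"
  shows "y \<in> gen_submod R M X \<Longrightarrow> a \<odot>\<^bsub>M\<^esub> y = \<zero>\<^bsub>M\<^esub>"
proof -
  have "gen_submod R M X \<subseteq> {y \<in> carrier M. a \<odot>\<^bsub>M\<^esub> y = \<zero>\<^bsub>M\<^esub>}"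
  proof (rule gen_submod_least)
    show "b \<odot>\<^bsub>M\<^esub> y \<in> {y \<in> carrier M. a \<odot>\<^bsub>M\<^esub> y = \<zero>\<^bsub>M\<^esub>}"
      if "b \<in> carrier R" "y \<in> {y \<in> carrier M. a \<odot>\<^bsub>M\<^esub> y = \<zero>\<^bsub>M\<^esub>}" for b y
      using that a smult_comm[of a b y] by simp
  qed (use a X in \<open>auto simp: smult_r_distr\<close>)
  then show "y \<in> gen_submod R M X \<Longrightarrow> a \<odot>\<^bsub>M\<^esub> y = \<zero>\<^bsub>M\<^esub>" by blast
qed

lemma ideal_mod_mono: "I \<subseteq> J \<Longrightarrow> ideal_mod R M I \<subseteq> ideal_mod R M J"
  unfolding ideal_mod_def by (rule gen_submod_mono) blast

lemma smult_in_ideal_mod: "a \<in> I \<Longrightarrow> m \<in> carrier M \<Longrightarrow> a \<odot>\<^bsub>M\<^esub> m \<in> ideal_mod R M I"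
  unfolding ideal_mod_def by (rule gen_submod.incl) blast

lemma ideal_mod_closed:
  "\<zero>\<^bsub>M\<^esub> \<in> ideal_mod R M I"
  "a \<in> carrier R \<Longrightarrow> x \<in> ideal_mod R M I \<Longrightarrow> a \<odot>\<^bsub>M\<^esub> x \<in> ideal_mod R M I"
  "x \<in> ideal_mod R M I \<Longrightarrow> y \<in> ideal_mod R M I \<Longrightarrow> x \<oplus>\<^bsub>M\<^esub> y \<in> ideal_mod R M I"
  unfolding ideal_mod_def by (auto intro: gen_submod.intros)

lemma (in module_rec) ideal_mod_submodule:
  "I \<subseteq> carrier R \<Longrightarrow> submodule (ideal_mod R M I) R M"
  unfolding ideal_mod_def by (rule gen_submod_submodule) auto

lemma (in module_rec) ideal_mod_subset_carrier:
  "I \<subseteq> carrier R \<Longrightarrow> ideal_mod R M I \<subseteq> carrier M"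
  using ideal_mod_submodule submoduleE(1) by blast

text \<open>Only the two zero laws are assumed, so that the lemma also applies to a localized module
  before it is known to be a module.\<close>
lemma ideal_mod_eq_zero_iff:
  assumes "\<And>a. a \<in> carrier R \<Longrightarrow> a \<odot>\<^bsub>M\<^esub> \<zero>\<^bsub>M\<^esub> = \<zero>\<^bsub>M\<^esub>" "\<zero>\<^bsub>M\<^esub> \<oplus>\<^bsub>M\<^esub> \<zero>\<^bsub>M\<^esub> = \<zero>\<^bsub>M\<^esub>"
  shows "ideal_mod R M I = {\<zero>\<^bsub>M\<^esub>} \<longleftrightarrow> (\<forall>a\<in>I. \<forall>m\<in>carrier M. a \<odot>\<^bsub>M\<^esub> m = \<zero>\<^bsub>M\<^esub>)"
proof
  assume kill: "\<forall>a\<in>I. \<forall>m\<in>carrier M. a \<odot>\<^bsub>M\<^esub> m = \<zero>\<^bsub>M\<^esub>"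
  have "ideal_mod R M I \<subseteq> {\<zero>\<^bsub>M\<^esub>}"
    unfolding ideal_mod_def
  proof (rule gen_submod_least)
    show "{a \<odot>\<^bsub>M\<^esub> m |a m. a \<in> I \<and> m \<in> carrier M} \<subseteq> {\<zero>\<^bsub>M\<^esub>}"
      using kill by blast
  qed (use assms in simp_all)
  then show "ideal_mod R M I = {\<zero>\<^bsub>M\<^esub>}" using ideal_mod_closed(1) by blast
next
  show "\<forall>a\<in>I. \<forall>m\<in>carrier M. a \<odot>\<^bsub>M\<^esub> m = \<zero>\<^bsub>M\<^esub>" if "ideal_mod R M I = {\<zero>\<^bsub>M\<^esub>}"
    using smult_in_ideal_mod[of _ I _ M R] that by simp
qed

lemma (in module_rec) ideal_mod_eq_zero_iff':
  "ideal_mod R M I = {\<zero>\<^bsub>M\<^esub>} \<longleftrightarrow> (\<forall>a\<in>I. \<forall>m\<in>carrier M. a \<odot>\<^bsub>M\<^esub> m = \<zero>\<^bsub>M\<^esub>)"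
  by (rule ideal_mod_eq_zero_iff) simp_all

lemma ideal_elt_eq_zero_iff:
  assumes "\<zero>\<^bsub>R\<^esub> \<in> I" "\<zero>\<^bsub>R\<^esub> \<odot>\<^bsub>M\<^esub> m = \<zero>\<^bsub>M\<^esub>"
  shows "ideal_elt R M I m = {\<zero>\<^bsub>M\<^esub>} \<longleftrightarrow> (\<forall>a\<in>I. a \<odot>\<^bsub>M\<^esub> m = \<zero>\<^bsub>M\<^esub>)"
proof
  assume "\<forall>a\<in>I. a \<odot>\<^bsub>M\<^esub> m = \<zero>\<^bsub>M\<^esub>"
  moreover have "\<zero>\<^bsub>M\<^esub> \<in> ideal_elt R M I m"
    unfolding ideal_elt_def using assms(1) assms(2)[symmetric] by blast
  ultimately show "ideal_elt R M I m = {\<zero>\<^bsub>M\<^esub>}" unfolding ideal_elt_def by blast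
qed (auto simp: ideal_elt_def)

lemma (in module_rec) ideal_elt_eq_zero_iff':
  assumes "ideal I R" "m \<in> carrier M"
  shows "ideal_elt R M I m = {\<zero>\<^bsub>M\<^esub>} \<longleftrightarrow> (\<forall>a\<in>I. a \<odot>\<^bsub>M\<^esub> m = \<zero>\<^bsub>M\<^esub>)"
proof -
  have "\<zero> \<in> I" using assms(1) by (simp add: additive_subgroup.zero_closed ideal.axioms(1))
  then show ?thesis using assms(2) by (simp add: ideal_elt_eq_zero_iff)
qed

section \<open>Homomorphisms and the module \<open>Hom_R(M, N)\<close>\<close>

lemma module_homD:
  assumes "f \<in> module_hom R M N"
  shows "x \<in> carrier M \<Longrightarrow> f x \<in> carrier N"
    and "x \<in> carrier M \<Longrightarrow> y \<in> carrier M \<Longrightarrow> f (x \<oplus>\<^bsub>M\<^esub> y) = f x \<oplus>\<^bsub>N\<^esub> f y"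
    and "a \<in> carrier R \<Longrightarrow> x \<in> carrier M \<Longrightarrow> f (a \<odot>\<^bsub>M\<^esub> x) = a \<odot>\<^bsub>N\<^esub> f x"
  using assms unfolding module_hom_def by auto

lemma hom_module_simps:
  "carrier (hom_module R M N) = module_hom R M N \<inter> extensional (carrier M)"
  "\<zero>\<^bsub>hom_module R M N\<^esub> = (\<lambda>x \<in> carrier M. \<zero>\<^bsub>N\<^esub>)"
  "f \<oplus>\<^bsub>hom_module R M N\<^esub> g = (\<lambda>x \<in> carrier M. f x \<oplus>\<^bsub>N\<^esub> g x)"
  "a \<odot>\<^bsub>hom_module R M N\<^esub> f = (\<lambda>x \<in> carrier M. a \<odot>\<^bsub>N\<^esub> f x)"
  unfolding hom_module_def by simp_all

lemma hom_module_eqI: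
  "\<lbrakk>f \<in> carrier (hom_module R M N); g \<in> carrier (hom_module R M N); \<And>x. x \<in> carrier M \<Longrightarrow> f x = g x\<rbrakk>
   \<Longrightarrow> f = g"
  by (auto simp: hom_module_simps intro: extensionalityI)

context module_rec
begin

lemma module_hom_zero:
  assumes "module R N" "f \<in> module_hom R M N"
  shows "f \<zero>\<^bsub>M\<^esub> = \<zero>\<^bsub>N\<^esub>"
proof -
  have "f \<zero>\<^bsub>M\<^esub> = \<zero> \<odot>\<^bsub>N\<^esub> f \<zero>\<^bsub>M\<^esub>"
    using module_homD(3)[OF assms(2), of \<zero> "\<zero>\<^bsub>M\<^esub>"] by simp
  then show ?thesis
    using module.smult_l_null[OF assms(1)] module_homD(1)[OF assms(2)] by simp
qed

lemma module_hom_vanishes_on_ideal_mod: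
  assumes N: "module R N" and f: "f \<in> module_hom R M N" and I: "I \<subseteq> carrier R"
    and kill: "\<And>a m. a \<in> I \<Longrightarrow> m \<in> carrier M \<Longrightarrow> f (a \<odot>\<^bsub>M\<^esub> m) = \<zero>\<^bsub>N\<^esub>"
    and y: "y \<in> ideal_mod R M I"
  shows "f y = \<zero>\<^bsub>N\<^esub>"
proof -
  interpret N: module R N by (rule N)
  have "ideal_mod R M I \<subseteq> {y \<in> carrier M. f y = \<zero>\<^bsub>N\<^esub>}"
    unfolding ideal_mod_def
  proof (rule gen_submod_least)
    show "\<zero>\<^bsub>M\<^esub> \<in> {y \<in> carrier M. f y = \<zero>\<^bsub>N\<^esub>}" using module_hom_zero[OF N f] by simp
  qed (use I kill module_homD[OF f] in auto)
  then show ?thesis using y by blast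
qed

lemma restrict_in_hom_module:
  "f \<in> module_hom R M N \<Longrightarrow> restrict f (carrier M) \<in> carrier (hom_module R M N)"
  unfolding hom_module_simps module_hom_def by auto

lemma hom_module_module:
  assumes N: "module R N"
  shows "module R (hom_module R M N)"
proof -
  interpret N: module R N by (rule N)
  let ?H = "hom_module R M N"
  have add: "f \<oplus>\<^bsub>?H\<^esub> g \<in> carrier ?H" if "f \<in> carrier ?H" "g \<in> carrier ?H" for f g
    using that unfolding hom_module_simps module_hom_def by (auto simp: Pi_iff N.a_ac N.smult_r_distr)
  have smult: "a \<odot>\<^bsub>?H\<^esub> f \<in> carrier ?H" if "a \<in> carrier R" "f \<in> carrier ?H" for a f
    using that unfolding hom_module_simps module_hom_def by (auto simp: Pi_iff N.smult_r_distr N.smult_comm)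
  have zero: "\<zero>\<^bsub>?H\<^esub> \<in> carrier ?H"
    unfolding hom_module_simps module_hom_def by auto
  have neg: "(\<ominus>\<one>) \<odot>\<^bsub>?H\<^esub> f \<oplus>\<^bsub>?H\<^esub> f = \<zero>\<^bsub>?H\<^esub>" if "f \<in> carrier ?H" for f
    using that unfolding hom_module_simps module_hom_def
    by (auto simp: Pi_iff N.smult_l_minus N.l_neg intro!: restrict_ext)
  have mem: "f x \<in> carrier N" if "f \<in> carrier ?H" "x \<in> carrier M" for f x
    using that unfolding hom_module_simps module_hom_def by auto
  show ?thesis
  proof (rule moduleI)
    show "abelian_group ?H"
    proof (rule abelian_groupI)
      show "\<exists>g\<in>carrier ?H. g \<oplus>\<^bsub>?H\<^esub> f = \<zero>\<^bsub>?H\<^esub>" if "f \<in> carrier ?H" for f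
        using neg smult that by blast
      show "\<zero>\<^bsub>?H\<^esub> \<oplus>\<^bsub>?H\<^esub> f = f" if f: "f \<in> carrier ?H" for f
        by (rule hom_module_eqI[OF add[OF zero f] f]) (simp add: hom_module_simps mem[OF f])
    qed (use add zero mem in \<open>auto simp: hom_module_simps N.a_ac intro!: restrict_ext\<close>)
    show "\<one> \<odot>\<^bsub>?H\<^esub> f = f" if f: "f \<in> carrier ?H" for f
      by (rule hom_module_eqI[OF smult[OF one_closed f] f]) (simp add: hom_module_simps mem[OF f])
  qed (use smult mem is_cring in \<open>auto simp: hom_module_simps N.smult_l_distr N.smult_r_distr
    N.smult_assoc1 intro!: restrict_ext\<close>)
qed

lemma hom_module_smult_eq_zero_iff:
  "f \<in> carrier (hom_module R M N) \<Longrightarrow>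
    a \<odot>\<^bsub>hom_module R M N\<^esub> f = \<zero>\<^bsub>hom_module R M N\<^esub> \<longleftrightarrow> (\<forall>x\<in>carrier M. a \<odot>\<^bsub>N\<^esub> f x = \<zero>\<^bsub>N\<^esub>)"
  by (auto simp: hom_module_simps restrict_def fun_eq_iff)

lemma ideal_mod_hom_module_eq_zero:
  assumes N: "module R N" and I: "I \<subseteq> carrier R" and IM: "ideal_mod R M I = {\<zero>\<^bsub>M\<^esub>}"
  shows "ideal_mod R (hom_module R M N) I = {\<zero>\<^bsub>hom_module R M N\<^esub>}"
proof -
  interpret H: module_rec R "hom_module R M N" by (rule module_recI[OF hom_module_module[OF N]])
  have "a \<odot>\<^bsub>N\<^esub> f x = \<zero>\<^bsub>N\<^esub>"
    if "a \<in> I" "f \<in> carrier (hom_module R M N)" "x \<in> carrier M" for a f x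
  proof -
    have f: "f \<in> module_hom R M N" using that(2) by (simp add: hom_module_simps)
    have "a \<odot>\<^bsub>M\<^esub> x = \<zero>\<^bsub>M\<^esub>" using IM that ideal_mod_eq_zero_iff' by blast
    then show ?thesis
      using module_homD(3)[OF f, of a x] module_hom_zero[OF N f] that I by auto
  qed
  then show ?thesis unfolding H.ideal_mod_eq_zero_iff' using hom_module_smult_eq_zero_iff by blast
qed

lemma hom_module_ideal_elt_eq_zero_iff:
  assumes N: "module R N" and I: "ideal I R" and f: "f \<in> carrier (hom_module R M N)"
  shows "ideal_elt R (hom_module R M N) I f = {\<zero>\<^bsub>hom_module R M N\<^esub>}
    \<longleftrightarrow> (\<forall>a\<in>I. \<forall>x\<in>carrier M. a \<odot>\<^bsub>N\<^esub> f x = \<zero>\<^bsub>N\<^esub>)"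
proof -
  interpret H: module_rec R "hom_module R M N" by (rule module_recI[OF hom_module_module[OF N]])
  show ?thesis by (simp add: H.ideal_elt_eq_zero_iff'[OF I f] hom_module_smult_eq_zero_iff[OF f])
qed

end

section \<open>Cyclic modules \<open>R/K\<close> as test modules\<close>

text \<open>The cosets \<open>r + K\<close> are encoded as sets of singleton lists, so that \<open>R/K\<close> becomes a module
  carried by \<open>'a list set\<close>, the type of the test modules in \<^const>\<open>injective_module\<close> and
  \<^const>\<open>cogenerator_module\<close>.\<close>
definition list_coset :: "'a ring \<Rightarrow> 'a set \<Rightarrow> 'a \<Rightarrow> 'a list set" where
  "list_coset R K r = {[x] | x. x \<in> carrier R \<and> x \<ominus>\<^bsub>R\<^esub> r \<in> K}"

definition list_coset_rep :: "'a ring \<Rightarrow> 'a set \<Rightarrow> 'a list set \<Rightarrow> 'a" where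
  "list_coset_rep R K X = (SOME r. r \<in> carrier R \<and> X = list_coset R K r)"

definition list_quot :: "'a ring \<Rightarrow> 'a set \<Rightarrow> ('a, 'a list set) module" where
  "list_quot R K = \<lparr> carrier = list_coset R K ` carrier R, monoid.mult = (\<lambda>X Y. undefined),
     one = undefined, zero = list_coset R K \<zero>\<^bsub>R\<^esub>,
     add = (\<lambda>X Y. list_coset R K (list_coset_rep R K X \<oplus>\<^bsub>R\<^esub> list_coset_rep R K Y)),
     smult = (\<lambda>a X. list_coset R K (a \<otimes>\<^bsub>R\<^esub> list_coset_rep R K X)) \<rparr>"

lemma list_quot_carrier: "carrier (list_quot R K) = list_coset R K ` carrier R"
  and list_quot_zero: "\<zero>\<^bsub>list_quot R K\<^esub> = list_coset R K \<zero>\<^bsub>R\<^esub>"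
  unfolding list_quot_def by simp_all

context cring_rec
begin

context
  fixes K assumes K: "ideal K R"
begin

lemma list_coset_eq_iff:
  assumes x: "x \<in> carrier R" and y: "y \<in> carrier R"
  shows "list_coset R K x = list_coset R K y \<longleftrightarrow> x \<ominus> y \<in> K"
proof
  have "x \<ominus> x = \<zero>" using x by algebra
  then have "x \<ominus> x \<in> K" using additive_subgroup.zero_closed[OF ideal.axioms(1)[OF K]] by simp
  then have "[x] \<in> list_coset R K x" using x unfolding list_coset_def by auto
  then show "x \<ominus> y \<in> K" if "list_coset R K x = list_coset R K y"
    using that unfolding list_coset_def by auto
next
  assume h: "x \<ominus> y \<in> K"
  have "z \<ominus> x \<in> K \<longleftrightarrow> z \<ominus> y \<in> K" if z: "z \<in> carrier R" for z
  proof -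
    have "z \<ominus> y = (z \<ominus> x) \<oplus> (x \<ominus> y)" "z \<ominus> x = (z \<ominus> y) \<ominus> (x \<ominus> y)"
      using x y z by algebra+
    then show ?thesis using h additive_subgroup.a_closed[OF ideal.axioms(1)[OF K]]
        additive_subgroup.a_closed[OF ideal.axioms(1)[OF K]]
        additive_subgroup.a_inv_closed[OF ideal.axioms(1)[OF K]] unfolding a_minus_def by metis
  qed
  then show "list_coset R K x = list_coset R K y" unfolding list_coset_def by blast
qed

lemma list_coset_eq_zero_iff:
  "a \<in> carrier R \<Longrightarrow> list_coset R K a = \<zero>\<^bsub>list_quot R K\<^esub> \<longleftrightarrow> a \<in> K"
  by (simp add: list_quot_zero list_coset_eq_iff a_minus_def)

lemma list_coset_rep:
  assumes x: "x \<in> carrier R"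
  shows "list_coset_rep R K (list_coset R K x) \<in> carrier R"
    and "list_coset_rep R K (list_coset R K x) \<ominus> x \<in> K"
proof -
  have "\<exists>r. r \<in> carrier R \<and> list_coset R K x = list_coset R K r" using x by blast
  then have "list_coset_rep R K (list_coset R K x) \<in> carrier R
      \<and> list_coset R K x = list_coset R K (list_coset_rep R K (list_coset R K x))"
    unfolding list_coset_rep_def by (rule someI_ex)
  then show "list_coset_rep R K (list_coset R K x) \<in> carrier R"
    and "list_coset_rep R K (list_coset R K x) \<ominus> x \<in> K"
    using list_coset_eq_iff x by auto
qed

lemma list_quot_add:
  assumes x: "x \<in> carrier R" and y: "y \<in> carrier R"
  shows "list_coset R K x \<oplus>\<^bsub>list_quot R K\<^esub> list_coset R K y = list_coset R K (x \<oplus> y)"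
proof -
  let ?x = "list_coset_rep R K (list_coset R K x)" and ?y = "list_coset_rep R K (list_coset R K y)"
  have c: "?x \<in> carrier R" "?y \<in> carrier R" using list_coset_rep x y by auto
  have "(?x \<ominus> x) \<oplus> (?y \<ominus> y) \<in> K"
    using list_coset_rep x y additive_subgroup.a_closed[OF ideal.axioms(1)[OF K]] by blast
  moreover have "(?x \<ominus> x) \<oplus> (?y \<ominus> y) = (?x \<oplus> ?y) \<ominus> (x \<oplus> y)" using c x y by algebra
  ultimately show ?thesis unfolding list_quot_def using list_coset_eq_iff c x y by simp
qed

lemma list_quot_smult:
  assumes a: "a \<in> carrier R" and x: "x \<in> carrier R"
  shows "a \<odot>\<^bsub>list_quot R K\<^esub> list_coset R K x = list_coset R K (a \<otimes> x)"
proof -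
  let ?x = "list_coset_rep R K (list_coset R K x)"
  have c: "?x \<in> carrier R" using list_coset_rep x by auto
  have "a \<otimes> (?x \<ominus> x) \<in> K" using list_coset_rep x a ideal.I_l_closed[OF K] by blast
  moreover have "a \<otimes> (?x \<ominus> x) = (a \<otimes> ?x) \<ominus> (a \<otimes> x)" using c x a by algebra
  ultimately show ?thesis unfolding list_quot_def using list_coset_eq_iff c x a by simp
qed

lemma list_quot_module: "module R (list_quot R K)"
proof (rule moduleI)
  show "abelian_group (list_quot R K)"
  proof (rule abelian_groupI)
    show "\<exists>Y\<in>carrier (list_quot R K). Y \<oplus>\<^bsub>list_quot R K\<^esub> X = \<zero>\<^bsub>list_quot R K\<^esub>"
      if X: "X \<in> carrier (list_quot R K)" for X
    proof -
      obtain x where x: "x \<in> carrier R" "X = list_coset R K x"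
        using X by (auto simp: list_quot_carrier)
      then show ?thesis
        by (intro bexI[of _ "list_coset R K (\<ominus> x)"]) (auto simp: list_quot_carrier list_quot_zero list_quot_add l_neg)
    qed
  qed (auto simp: list_quot_carrier list_quot_zero list_quot_add a_ac)
qed (auto simp: list_quot_carrier list_quot_add list_quot_smult l_distr r_distr m_assoc is_cring)

lemma list_quot_hom_apply:
  assumes N: "module R N" and g: "g \<in> module_hom R (list_quot R K) N" and c: "c \<in> carrier R"
  shows "g (list_coset R K c) = c \<odot>\<^bsub>N\<^esub> g (list_coset R K \<one>)"
  using module_homD(3)[OF g c, of "list_coset R K \<one>"] c
  by (simp add: list_quot_carrier list_quot_smult)

end

lemma list_coset_zero_rep: "x \<in> carrier R \<Longrightarrow> list_coset_rep R {\<zero>} (list_coset R {\<zero>} x) = x"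
  using list_coset_rep[OF zeroideal] by (metis a_minus_def add.inv_closed minus_equality r_neg singletonD)

lemma list_coset_zero_submodule:
  assumes J: "ideal J R"
  shows "submodule (list_coset R {\<zero>} ` J) R (list_quot R {\<zero>})"
proof -
  interpret B: module_rec R "list_quot R {\<zero>}" by (rule module_recI[OF list_quot_module[OF zeroideal]])
  have Jc: "J \<subseteq> carrier R" using ideal.Icarr[OF J] by blast
  show ?thesis
  proof (rule B.submoduleI_smult)
    show "list_coset R {\<zero>} ` J \<subseteq> carrier (list_quot R {\<zero>})" using Jc by (auto simp: list_quot_carrier)
    show "\<zero>\<^bsub>list_quot R {\<zero>}\<^esub> \<in> list_coset R {\<zero>} ` J"
      using additive_subgroup.zero_closed[OF ideal.axioms(1)[OF J]] by (simp add: list_quot_zero)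
  qed (use J Jc in \<open>auto simp: list_quot_add[OF zeroideal] list_quot_smult[OF zeroideal]
    subset_iff additive_subgroup.a_closed[OF ideal.axioms(1)] ideal.I_l_closed\<close>)
qed

lemma cogenerator_annihilator_witness:
  assumes N: "module R N" and cog: "cogenerator_module R N" and K: "ideal K R"
    and a: "a \<in> carrier R" "a \<notin> K"
  obtains m where "m \<in> carrier N" "\<And>c. c \<in> K \<Longrightarrow> c \<odot>\<^bsub>N\<^esub> m = \<zero>\<^bsub>N\<^esub>" "a \<odot>\<^bsub>N\<^esub> m \<noteq> \<zero>\<^bsub>N\<^esub>"
proof -
  let ?Q = "list_quot R K"
  have Q: "module R ?Q" by (rule list_quot_module[OF K])
  obtain g where g: "g \<in> module_hom R ?Q N" "g (list_coset R K a) \<noteq> \<zero>\<^bsub>N\<^esub>"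
    using cog[unfolded cogenerator_module_def, rule_format, of ?Q "list_coset R K a"] Q a
      list_coset_eq_zero_iff[OF K] by (auto simp: list_quot_carrier)
  let ?m = "g (list_coset R K \<one>)"
  show ?thesis
  proof
    show "?m \<in> carrier N" using module_homD(1)[OF g(1)] by (simp add: list_quot_carrier)
    show "c \<odot>\<^bsub>N\<^esub> ?m = \<zero>\<^bsub>N\<^esub>" if "c \<in> K" for c
    proof -
      have c: "c \<in> carrier R" using that ideal.Icarr[OF K] by blast
      have "c \<odot>\<^bsub>N\<^esub> ?m = g \<zero>\<^bsub>?Q\<^esub>"
        using list_quot_hom_apply[OF K N g(1) c] list_coset_eq_zero_iff[OF K c] that by simp
      then show ?thesis using module_rec.module_hom_zero[OF module_recI[OF Q] N g(1)] by simp
    qed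
    show "a \<odot>\<^bsub>N\<^esub> ?m \<noteq> \<zero>\<^bsub>N\<^esub>" using list_quot_hom_apply[OF K N g(1) a(1)] g(2) by simp
  qed
qed

lemma list_quot_annihilated:
  assumes J: "ideal J R" and b: "b \<in> J" and X: "X \<in> carrier (list_quot R J)"
  shows "b \<odot>\<^bsub>list_quot R J\<^esub> X = \<zero>\<^bsub>list_quot R J\<^esub>"
proof -
  obtain r where r: "r \<in> carrier R" "X = list_coset R J r" using X by (auto simp: list_quot_carrier)
  have bc: "b \<in> carrier R" using ideal.Icarr[OF J b] .
  have "b \<otimes> r \<in> J" using ideal.I_r_closed[OF J b r(1)] .
  then show ?thesis using list_coset_eq_zero_iff[OF J] list_quot_smult[OF J bc r(1)] r bc by simp
qed

end

section \<open>Baer's criterion and separation by an injective cogenerator\<close>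

definition linear_graph :: "'a ring \<Rightarrow> ('a, 'b) module \<Rightarrow> ('a, 'n) module \<Rightarrow> ('b \<times> 'n) set \<Rightarrow> bool"
  where "linear_graph R B N G \<longleftrightarrow> G \<subseteq> carrier B \<times> carrier N \<and> (\<zero>\<^bsub>B\<^esub>, \<zero>\<^bsub>N\<^esub>) \<in> G \<and> single_valued G
    \<and> (\<forall>x u y v. (x, u) \<in> G \<longrightarrow> (y, v) \<in> G \<longrightarrow> (x \<oplus>\<^bsub>B\<^esub> y, u \<oplus>\<^bsub>N\<^esub> v) \<in> G)
    \<and> (\<forall>r x u. r \<in> carrier R \<longrightarrow> (x, u) \<in> G \<longrightarrow> (r \<odot>\<^bsub>B\<^esub> x, r \<odot>\<^bsub>N\<^esub> u) \<in> G)"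

lemma linear_graphD:
  assumes "linear_graph R B N G"
  shows "(x, u) \<in> G \<Longrightarrow> x \<in> carrier B" "(x, u) \<in> G \<Longrightarrow> u \<in> carrier N"
    and "(\<zero>\<^bsub>B\<^esub>, \<zero>\<^bsub>N\<^esub>) \<in> G"
    and "(x, u) \<in> G \<Longrightarrow> (x, v) \<in> G \<Longrightarrow> u = v"
    and "(x, u) \<in> G \<Longrightarrow> (y, v) \<in> G \<Longrightarrow> (x \<oplus>\<^bsub>B\<^esub> y, u \<oplus>\<^bsub>N\<^esub> v) \<in> G"
    and "r \<in> carrier R \<Longrightarrow> (x, u) \<in> G \<Longrightarrow> (r \<odot>\<^bsub>B\<^esub> x, r \<odot>\<^bsub>N\<^esub> u) \<in> G"
  using assms unfolding linear_graph_def by (auto dest: single_valuedD)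

lemma linear_graph_the:
  "linear_graph R B N G \<Longrightarrow> (x, u) \<in> G \<Longrightarrow> (THE u. (x, u) \<in> G) = u"
  by (rule the_equality) (auto dest: linear_graphD(4))

definition adjoin_graph ::
  "'a ring \<Rightarrow> ('a, 'b) module \<Rightarrow> ('a, 'n) module \<Rightarrow> ('b \<times> 'n) set \<Rightarrow> 'b \<Rightarrow> 'n \<Rightarrow> ('b \<times> 'n) set"
  where "adjoin_graph R B N G b n =
    {(x \<oplus>\<^bsub>B\<^esub> r \<odot>\<^bsub>B\<^esub> b, u \<oplus>\<^bsub>N\<^esub> r \<odot>\<^bsub>N\<^esub> n) | x u r. (x, u) \<in> G \<and> r \<in> carrier R}"

definition baer_condition :: "'a ring \<Rightarrow> ('a, 'n) module \<Rightarrow> bool" where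
  "baer_condition R N \<longleftrightarrow> (\<forall>J f. ideal J R \<and> f \<in> J \<rightarrow> carrier N
     \<and> (\<forall>i\<in>J. \<forall>j\<in>J. f (i \<oplus>\<^bsub>R\<^esub> j) = f i \<oplus>\<^bsub>N\<^esub> f j)
     \<and> (\<forall>r\<in>carrier R. \<forall>j\<in>J. f (r \<otimes>\<^bsub>R\<^esub> j) = r \<odot>\<^bsub>N\<^esub> f j)
     \<longrightarrow> (\<exists>n\<in>carrier N. \<forall>j\<in>J. f j = j \<odot>\<^bsub>N\<^esub> n))"

lemma linear_graph_Union:
  assumes "C \<noteq> {}" and G: "\<And>G. G \<in> C \<Longrightarrow> linear_graph R B N G"
    and chain: "\<And>G H. G \<in> C \<Longrightarrow> H \<in> C \<Longrightarrow> G \<subseteq> H \<or> H \<subseteq> G"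
  shows "linear_graph R B N (\<Union>C)"
proof -
  have common: "\<exists>G\<in>C. p \<in> G \<and> q \<in> G" if "p \<in> \<Union>C" "q \<in> \<Union>C" for p q
    using that chain by blast
  show ?thesis
    unfolding linear_graph_def
  proof (intro conjI allI impI)
    show "\<Union>C \<subseteq> carrier B \<times> carrier N" using G unfolding linear_graph_def by blast
    show "(\<zero>\<^bsub>B\<^esub>, \<zero>\<^bsub>N\<^esub>) \<in> \<Union>C" using G \<open>C \<noteq> {}\<close> unfolding linear_graph_def by blast
    show "single_valued (\<Union>C)"
    proof (rule single_valuedI)
      fix x y z assume "(x, y) \<in> \<Union>C" "(x, z) \<in> \<Union>C"
      then obtain H where "H \<in> C" "(x, y) \<in> H" "(x, z) \<in> H" using common by blast
      then show "y = z" using G unfolding linear_graph_def by (blast dest: single_valuedD)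
    qed
    show "(x \<oplus>\<^bsub>B\<^esub> y, u \<oplus>\<^bsub>N\<^esub> v) \<in> \<Union>C" if xy: "(x, u) \<in> \<Union>C" "(y, v) \<in> \<Union>C" for x u y v
    proof -
      obtain H where "H \<in> C" "(x, u) \<in> H" "(y, v) \<in> H" using common[OF xy] by blast
      then show ?thesis using G unfolding linear_graph_def by blast
    qed
    show "(r \<odot>\<^bsub>B\<^esub> x, r \<odot>\<^bsub>N\<^esub> u) \<in> \<Union>C" if "r \<in> carrier R" "(x, u) \<in> \<Union>C" for r x u
      using that G unfolding linear_graph_def by blast
  qed
qed

lemma linear_graph_chain_bound:
  assumes G0: "linear_graph R B N G0" and C: "C \<in> chains {G. linear_graph R B N G \<and> G0 \<subseteq> G}"
  shows "\<Union>(insert G0 C) \<in> {G. linear_graph R B N G \<and> G0 \<subseteq> G}"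
proof -
  have sub: "C \<subseteq> {G. linear_graph R B N G \<and> G0 \<subseteq> G}" and chain: "chain\<^sub>\<subseteq> C"
    using C unfolding chains_def by auto
  have lin: "linear_graph R B N G" if "G \<in> insert G0 C" for G
    using that sub G0 by auto
  have ch: "G \<subseteq> H \<or> H \<subseteq> G" if GH: "G \<in> insert G0 C" "H \<in> insert G0 C" for G H
  proof -
    from GH consider "G = G0" | "H = G0" | "G \<in> C" "H \<in> C" by blast
    then show ?thesis
    proof cases
      case 3
      then show ?thesis using chain unfolding chain_subset_def by blast
    qed (use GH sub in auto)
  qed
  have "linear_graph R B N (\<Union>(insert G0 C))"
    by (rule linear_graph_Union[OF insert_not_empty lin ch])
  then show ?thesis by auto
qed

context cring_rec
begin

context
  fixes B :: "('a, 'b) module" and N :: "('a, 'n) module"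
  assumes B: "module R B" and N: "module R N"
begin

interpretation B: module_rec R B by (rule module_recI[OF B])
interpretation N: module_rec R N by (rule module_recI[OF N])

lemma linear_graph_diff:
  assumes "linear_graph R B N G" "(x, u) \<in> G" "(y, v) \<in> G"
  shows "(y \<ominus>\<^bsub>B\<^esub> x, v \<ominus>\<^bsub>N\<^esub> u) \<in> G"
proof -
  have "x \<in> carrier B" "u \<in> carrier N" "((\<ominus> \<one>) \<odot>\<^bsub>B\<^esub> x, (\<ominus> \<one>) \<odot>\<^bsub>N\<^esub> u) \<in> G"
    using assms(1,2) unfolding linear_graph_def by auto
  then have "(\<ominus>\<^bsub>B\<^esub> x, \<ominus>\<^bsub>N\<^esub> u) \<in> G"
    by (simp add: B.smult_l_minus N.smult_l_minus)
  then show ?thesis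
    using assms unfolding linear_graph_def a_minus_def by blast
qed

lemma linear_graph_Domain_submodule:
  assumes "linear_graph R B N G"
  shows "submodule (Domain G) R B"
  using assms unfolding linear_graph_def by (intro B.submoduleI_smult) blast+

lemma adjoin_graph_single_valued:
  assumes G: "linear_graph R B N G" and b: "b \<in> carrier B" and n: "n \<in> carrier N"
    and compat: "\<And>r u. r \<in> carrier R \<Longrightarrow> (r \<odot>\<^bsub>B\<^esub> b, u) \<in> G \<Longrightarrow> u = r \<odot>\<^bsub>N\<^esub> n"
  shows "single_valued (adjoin_graph R B N G b n)"
proof (rule single_valuedI)
  fix z w w' assume "(z, w) \<in> adjoin_graph R B N G b n" "(z, w') \<in> adjoin_graph R B N G b n"
  then obtain x u r y v s where xu: "(x, u) \<in> G" "r \<in> carrier R" "z = x \<oplus>\<^bsub>B\<^esub> r \<odot>\<^bsub>B\<^esub> b"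
      "w = u \<oplus>\<^bsub>N\<^esub> r \<odot>\<^bsub>N\<^esub> n"
    and yv: "(y, v) \<in> G" "s \<in> carrier R" "z = y \<oplus>\<^bsub>B\<^esub> s \<odot>\<^bsub>B\<^esub> b" "w' = v \<oplus>\<^bsub>N\<^esub> s \<odot>\<^bsub>N\<^esub> n"
    unfolding adjoin_graph_def by blast
  note car = linear_graphD(1,2)[OF G]
  have "y \<ominus>\<^bsub>B\<^esub> x = (r \<ominus> s) \<odot>\<^bsub>B\<^esub> b"
    using B.add_eq_add_iff_minus_eq[of x "r \<odot>\<^bsub>B\<^esub> b" y "s \<odot>\<^bsub>B\<^esub> b"] xu yv car b
    by (simp add: B.smult_minus_distr)
  then have "((r \<ominus> s) \<odot>\<^bsub>B\<^esub> b, v \<ominus>\<^bsub>N\<^esub> u) \<in> G" using linear_graph_diff[OF G xu(1) yv(1)] by simp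
  then have "v \<ominus>\<^bsub>N\<^esub> u = (r \<ominus> s) \<odot>\<^bsub>N\<^esub> n"
    using compat xu(2) yv(2) by simp
  then have "v \<ominus>\<^bsub>N\<^esub> u = r \<odot>\<^bsub>N\<^esub> n \<ominus>\<^bsub>N\<^esub> s \<odot>\<^bsub>N\<^esub> n"
    using xu(2) yv(2) n by (simp add: N.smult_minus_distr)
  then show "w = w'"
    using N.add_eq_add_iff_minus_eq[of u "r \<odot>\<^bsub>N\<^esub> n" v "s \<odot>\<^bsub>N\<^esub> n"] xu yv car n by simp
qed

lemma adjoin_graph_closed:
  assumes G: "linear_graph R B N G" and b: "b \<in> carrier B" and n: "n \<in> carrier N"
    and zw: "(z, w) \<in> adjoin_graph R B N G b n"
  shows "(z', w') \<in> adjoin_graph R B N G b n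
      \<Longrightarrow> (z \<oplus>\<^bsub>B\<^esub> z', w \<oplus>\<^bsub>N\<^esub> w') \<in> adjoin_graph R B N G b n"
    and "c \<in> carrier R \<Longrightarrow> (c \<odot>\<^bsub>B\<^esub> z, c \<odot>\<^bsub>N\<^esub> w) \<in> adjoin_graph R B N G b n"
proof -
  note car = linear_graphD(1,2)[OF G]
  obtain x u r where xu: "(x, u) \<in> G" "r \<in> carrier R" "z = x \<oplus>\<^bsub>B\<^esub> r \<odot>\<^bsub>B\<^esub> b"
      "w = u \<oplus>\<^bsub>N\<^esub> r \<odot>\<^bsub>N\<^esub> n"
    using zw unfolding adjoin_graph_def by blast
  show "(z \<oplus>\<^bsub>B\<^esub> z', w \<oplus>\<^bsub>N\<^esub> w') \<in> adjoin_graph R B N G b n"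
    if "(z', w') \<in> adjoin_graph R B N G b n"
  proof -
    obtain y v s where yv: "(y, v) \<in> G" "s \<in> carrier R" "z' = y \<oplus>\<^bsub>B\<^esub> s \<odot>\<^bsub>B\<^esub> b"
        "w' = v \<oplus>\<^bsub>N\<^esub> s \<odot>\<^bsub>N\<^esub> n"
      using \<open>(z', w') \<in> adjoin_graph R B N G b n\<close> unfolding adjoin_graph_def by blast
    have "z \<oplus>\<^bsub>B\<^esub> z' = (x \<oplus>\<^bsub>B\<^esub> y) \<oplus>\<^bsub>B\<^esub> (r \<oplus> s) \<odot>\<^bsub>B\<^esub> b"
      "w \<oplus>\<^bsub>N\<^esub> w' = (u \<oplus>\<^bsub>N\<^esub> v) \<oplus>\<^bsub>N\<^esub> (r \<oplus> s) \<odot>\<^bsub>N\<^esub> n"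
      using xu yv car b n by (simp_all add: B.smult_l_distr N.smult_l_distr B.a_ac N.a_ac)
    then show ?thesis
      using linear_graphD(5)[OF G xu(1) yv(1)] xu(2) yv(2) unfolding adjoin_graph_def by blast
  qed
  show "(c \<odot>\<^bsub>B\<^esub> z, c \<odot>\<^bsub>N\<^esub> w) \<in> adjoin_graph R B N G b n" if c: "c \<in> carrier R"
  proof -
    have "c \<odot>\<^bsub>B\<^esub> z = c \<odot>\<^bsub>B\<^esub> x \<oplus>\<^bsub>B\<^esub> (c \<otimes> r) \<odot>\<^bsub>B\<^esub> b"
      "c \<odot>\<^bsub>N\<^esub> w = c \<odot>\<^bsub>N\<^esub> u \<oplus>\<^bsub>N\<^esub> (c \<otimes> r) \<odot>\<^bsub>N\<^esub> n"
      using xu car b n c by (simp_all add: B.smult_r_distr N.smult_r_distr B.smult_assoc1 N.smult_assoc1)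
    then show ?thesis
      using linear_graphD(6)[OF G c xu(1)] c xu(2) unfolding adjoin_graph_def by blast
  qed
qed

lemma adjoin_graph_extends:
  assumes G: "linear_graph R B N G" and b: "b \<in> carrier B" and n: "n \<in> carrier N"
  shows "G \<subseteq> adjoin_graph R B N G b n" "(b, n) \<in> adjoin_graph R B N G b n"
proof -
  show "G \<subseteq> adjoin_graph R B N G b n"
  proof
    fix p assume p: "p \<in> G"
    then obtain x u where xu: "p = (x, u)" "(x, u) \<in> G" by (cases p) auto
    then have "x \<oplus>\<^bsub>B\<^esub> \<zero> \<odot>\<^bsub>B\<^esub> b = x" "u \<oplus>\<^bsub>N\<^esub> \<zero> \<odot>\<^bsub>N\<^esub> n = u"
      using linear_graphD(1,2)[OF G] b n by simp_all
    with xu show "p \<in> adjoin_graph R B N G b n" unfolding adjoin_graph_def by force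
  qed
  have "b = \<zero>\<^bsub>B\<^esub> \<oplus>\<^bsub>B\<^esub> \<one> \<odot>\<^bsub>B\<^esub> b" "n = \<zero>\<^bsub>N\<^esub> \<oplus>\<^bsub>N\<^esub> \<one> \<odot>\<^bsub>N\<^esub> n" using b n by simp_all
  then show "(b, n) \<in> adjoin_graph R B N G b n"
    using linear_graphD(3)[OF G] unfolding adjoin_graph_def by fastforce
qed

lemma linear_graph_adjoin:
  assumes G: "linear_graph R B N G" and b: "b \<in> carrier B" and n: "n \<in> carrier N"
    and compat: "\<And>r u. r \<in> carrier R \<Longrightarrow> (r \<odot>\<^bsub>B\<^esub> b, u) \<in> G \<Longrightarrow> u = r \<odot>\<^bsub>N\<^esub> n"
  shows "linear_graph R B N (adjoin_graph R B N G b n)"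
  unfolding linear_graph_def
proof (intro conjI allI impI)
  show "adjoin_graph R B N G b n \<subseteq> carrier B \<times> carrier N"
    using linear_graphD(1,2)[OF G] b n unfolding adjoin_graph_def by auto
  show "(\<zero>\<^bsub>B\<^esub>, \<zero>\<^bsub>N\<^esub>) \<in> adjoin_graph R B N G b n"
    using adjoin_graph_extends(1)[OF G b n] linear_graphD(3)[OF G] by blast
qed (use adjoin_graph_single_valued[OF assms] adjoin_graph_closed[OF G b n] in auto)

lemma linear_graph_total_hom:
  assumes G: "linear_graph R B N G" and dom: "Domain G = carrier B"
  obtains h where "h \<in> module_hom R B N" "\<And>x u. (x, u) \<in> G \<Longrightarrow> h x = u"
proof -
  define h where "h x = (THE u. (x, u) \<in> G)" for x
  have h_eq: "h x = u" if "(x, u) \<in> G" for x u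
    unfolding h_def by (rule linear_graph_the[OF G that])
  have val: "(x, h x) \<in> G" if "x \<in> carrier B" for x
  proof -
    obtain u where "(x, u) \<in> G" using \<open>x \<in> carrier B\<close> dom by blast
    then show ?thesis using h_eq by simp
  qed
  have "h \<in> module_hom R B N"
    unfolding module_hom_def
  proof (intro CollectI conjI ballI)
    show "h \<in> carrier B \<rightarrow> carrier N" using val linear_graphD(2)[OF G] by blast
    show "h (x \<oplus>\<^bsub>B\<^esub> y) = h x \<oplus>\<^bsub>N\<^esub> h y" if "x \<in> carrier B" "y \<in> carrier B" for x y
      using h_eq[OF linear_graphD(5)[OF G val[OF that(1)] val[OF that(2)]]] .
    show "h (a \<odot>\<^bsub>B\<^esub> x) = a \<odot>\<^bsub>N\<^esub> h x" if "a \<in> carrier R" "x \<in> carrier B" for a x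
      using h_eq[OF linear_graphD(6)[OF G that(1) val[OF that(2)]]] .
  qed
  with h_eq that show ?thesis by blast
qed

lemma linear_graph_extend:
  assumes baer: "baer_condition R N" and G: "linear_graph R B N G" and b: "b \<in> carrier B"
  obtains G' where "linear_graph R B N G'" "G \<subseteq> G'" "b \<in> Domain G'"
proof -
  let ?J = "{r \<in> carrier R. r \<odot>\<^bsub>B\<^esub> b \<in> Domain G}"
  let ?f = "\<lambda>r. THE u. (r \<odot>\<^bsub>B\<^esub> b, u) \<in> G"
  have J: "ideal ?J R" by (rule B.colon_ideal[OF linear_graph_Domain_submodule[OF G] b])
  have f_in: "(r \<odot>\<^bsub>B\<^esub> b, ?f r) \<in> G" if r: "r \<in> ?J" for r
  proof -
    obtain u where "(r \<odot>\<^bsub>B\<^esub> b, u) \<in> G" using r by blast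
    then show ?thesis using linear_graph_the[OF G] by simp
  qed
  have f_Pi: "?f \<in> ?J \<rightarrow> carrier N" by (rule Pi_I) (rule linear_graphD(2)[OF G f_in])
  have f_add: "\<forall>i\<in>?J. \<forall>j\<in>?J. ?f (i \<oplus> j) = ?f i \<oplus>\<^bsub>N\<^esub> ?f j"
  proof (intro ballI)
    fix i j assume i: "i \<in> ?J" and j: "j \<in> ?J"
    have "(i \<odot>\<^bsub>B\<^esub> b \<oplus>\<^bsub>B\<^esub> j \<odot>\<^bsub>B\<^esub> b, ?f i \<oplus>\<^bsub>N\<^esub> ?f j) \<in> G"
      by (rule linear_graphD(5)[OF G f_in[OF i] f_in[OF j]])
    then show "?f (i \<oplus> j) = ?f i \<oplus>\<^bsub>N\<^esub> ?f j"
      using linear_graph_the[OF G] i j b by (simp add: B.smult_l_distr)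
  qed
  have f_smult: "\<forall>r\<in>carrier R. \<forall>j\<in>?J. ?f (r \<otimes> j) = r \<odot>\<^bsub>N\<^esub> ?f j"
  proof (intro ballI)
    fix r j assume r: "r \<in> carrier R" and j: "j \<in> ?J"
    have "(r \<odot>\<^bsub>B\<^esub> (j \<odot>\<^bsub>B\<^esub> b), r \<odot>\<^bsub>N\<^esub> ?f j) \<in> G"
      by (rule linear_graphD(6)[OF G r f_in[OF j]])
    then show "?f (r \<otimes> j) = r \<odot>\<^bsub>N\<^esub> ?f j"
      using linear_graph_the[OF G] r j b by (simp add: B.smult_assoc1)
  qed
  obtain n where n: "n \<in> carrier N" "\<And>j. j \<in> ?J \<Longrightarrow> ?f j = j \<odot>\<^bsub>N\<^esub> n"
    using baer[unfolded baer_condition_def, rule_format, OF conjI[OF J conjI[OF f_Pi conjI[OF f_add f_smult]]]]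
    by blast
  have "u = r \<odot>\<^bsub>N\<^esub> n" if "r \<in> carrier R" "(r \<odot>\<^bsub>B\<^esub> b, u) \<in> G" for r u
    using that n(2)[of r] linear_graph_the[OF G that(2)] by blast
  then show ?thesis
    using that linear_graph_adjoin[OF G b n(1)] adjoin_graph_extends[OF G b n(1)] by blast
qed

text \<open>Baer's criterion, by Zorn's lemma applied to the linear graphs containing \<open>G0\<close>.\<close>
lemma baer_condition_extend:
  assumes baer: "baer_condition R N" and G0: "linear_graph R B N G0"
  obtains h where "h \<in> module_hom R B N" "\<And>x u. (x, u) \<in> G0 \<Longrightarrow> h x = u"
proof -
  let ?Gs = "{G. linear_graph R B N G \<and> G0 \<subseteq> G}"
  have "\<forall>C\<in>chains ?Gs. \<exists>U\<in>?Gs. \<forall>X\<in>C. X \<subseteq> U"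
  proof
    fix C assume "C \<in> chains ?Gs"
    then show "\<exists>U\<in>?Gs. \<forall>X\<in>C. X \<subseteq> U"
      by (intro bexI[OF _ linear_graph_chain_bound[OF G0]]) auto
  qed
  then obtain Gm where "Gm \<in> ?Gs" and max: "\<forall>G\<in>?Gs. Gm \<subseteq> G \<longrightarrow> G = Gm"
    by (rule Zorn_Lemma2[THEN bexE])
  then have Gm: "linear_graph R B N Gm" "G0 \<subseteq> Gm" by auto
  have dom: "Domain Gm = carrier B"
  proof
    show "Domain Gm \<subseteq> carrier B" using linear_graphD(1)[OF Gm(1)] by auto
    show "carrier B \<subseteq> Domain Gm"
    proof
      fix b assume b: "b \<in> carrier B"
      obtain G' where G': "linear_graph R B N G'" "Gm \<subseteq> G'" "b \<in> Domain G'"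
        by (rule linear_graph_extend[OF baer Gm(1) b])
      then have "G' = Gm" using max Gm(2) by auto
      with G'(3) show "b \<in> Domain Gm" by simp
    qed
  qed
  obtain h where h: "h \<in> module_hom R B N" "\<And>x u. (x, u) \<in> Gm \<Longrightarrow> h x = u"
    using linear_graph_total_hom[OF Gm(1) dom] by blast
  show ?thesis
  proof (rule that[OF h(1)])
    show "h x = u" if "(x, u) \<in> G0" for x u using h(2) Gm(2) that by auto
  qed
qed

end

lemma injective_module_baer_condition:
  fixes N :: "('a, 'n) module"
  assumes N: "module R N" and inj: "injective_module R N"
  shows "baer_condition R N"
  unfolding baer_condition_def
proof (intro allI impI)
  fix J and f :: "'a \<Rightarrow> 'n"
  assume "ideal J R \<and> f \<in> J \<rightarrow> carrier N \<and> (\<forall>i\<in>J. \<forall>j\<in>J. f (i \<oplus> j) = f i \<oplus>\<^bsub>N\<^esub> f j)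
    \<and> (\<forall>r\<in>carrier R. \<forall>j\<in>J. f (r \<otimes> j) = r \<odot>\<^bsub>N\<^esub> f j)"
  then have J: "ideal J R" and f: "f \<in> J \<rightarrow> carrier N" "\<forall>i\<in>J. \<forall>j\<in>J. f (i \<oplus> j) = f i \<oplus>\<^bsub>N\<^esub> f j"
    "\<forall>r\<in>carrier R. \<forall>j\<in>J. f (r \<otimes> j) = r \<odot>\<^bsub>N\<^esub> f j" by auto
  have Jc: "J \<subseteq> carrier R" using ideal.Icarr[OF J] by blast
  let ?c = "list_coset R {\<zero>}" and ?B = "list_quot R {\<zero>}"
  let ?A = "?B\<lparr>carrier := ?c ` J\<rparr>"
  have B: "module R ?B" by (rule list_quot_module[OF zeroideal])
  have A: "module R ?A" by (rule submodule.submodule_is_module[OF list_coset_zero_submodule[OF J] B])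
  have incl: "id \<in> module_hom R ?A ?B" "inj_on id (carrier ?A)"
    using Jc by (auto simp: module_hom_def list_quot_carrier)
  have g: "f \<circ> list_coset_rep R {\<zero>} \<in> module_hom R ?A N"
    using f Jc unfolding module_hom_def
    by (auto simp: list_coset_zero_rep subset_iff list_quot_add[OF zeroideal]
        list_quot_smult[OF zeroideal] additive_subgroup.a_closed[OF ideal.axioms(1)[OF J]]
        ideal.I_l_closed[OF J])
  obtain h where h: "h \<in> module_hom R ?B N" "\<forall>x\<in>carrier ?A. h (id x) = (f \<circ> list_coset_rep R {\<zero>}) x"
    using inj[unfolded injective_module_def, rule_format, OF conjI[OF A conjI[OF B conjI[OF incl(1)
          conjI[OF incl(2) g]]]]] by blast
  show "\<exists>n\<in>carrier N. \<forall>j\<in>J. f j = j \<odot>\<^bsub>N\<^esub> n"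
  proof (intro bexI ballI)
    show "h (?c \<one>) \<in> carrier N" using module_homD(1)[OF h(1)] by (simp add: list_quot_carrier)
    fix j assume j: "j \<in> J"
    then have "f j = h (?c j)" using h(2) list_coset_zero_rep Jc by auto
    also have "\<dots> = j \<odot>\<^bsub>N\<^esub> h (?c \<one>)"
      using list_quot_hom_apply[OF zeroideal N h(1)] j Jc by blast
    finally show "f j = j \<odot>\<^bsub>N\<^esub> h (?c \<one>)" .
  qed
qed

lemma injective_module_extend:
  assumes "module R B" "module R N" "injective_module R N" "linear_graph R B N G"
  obtains h where "h \<in> module_hom R B N" "\<And>x u. (x, u) \<in> G \<Longrightarrow> h x = u"
  using baer_condition_extend[OF assms(1,2) injective_module_baer_condition[OF assms(2,3)] assms(4)]
  by blast

lemma injective_cogenerator_separates: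
  fixes M :: "('a, 'm) module" and N :: "('a, 'n) module"
  assumes M: "module R M" and N: "module R N" and inj: "injective_module R N"
    and cog: "cogenerator_module R N" and U: "submodule U R M" and x: "x \<in> carrier M" "x \<notin> U"
  obtains h where "h \<in> module_hom R M N" "\<And>u. u \<in> U \<Longrightarrow> h u = \<zero>\<^bsub>N\<^esub>" "h x \<noteq> \<zero>\<^bsub>N\<^esub>"
proof -
  interpret M: module_rec R M by (rule module_recI[OF M])
  interpret N: module_rec R N by (rule module_recI[OF N])
  let ?K = "{r \<in> carrier R. r \<odot>\<^bsub>M\<^esub> x \<in> U}"
  have "\<one> \<notin> ?K" using x by simp
  then obtain n where n: "n \<in> carrier N" "\<And>c. c \<in> ?K \<Longrightarrow> c \<odot>\<^bsub>N\<^esub> n = \<zero>\<^bsub>N\<^esub>"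
      "\<one> \<odot>\<^bsub>N\<^esub> n \<noteq> \<zero>\<^bsub>N\<^esub>"
    using cogenerator_annihilator_witness[OF N cog M.colon_ideal[OF U x(1)] one_closed] by blast
  have U_sub: "U \<subseteq> carrier M" using M.submoduleE(1)[OF U] .
  have G0: "linear_graph R M N (U \<times> {\<zero>\<^bsub>N\<^esub>})"
    unfolding linear_graph_def using U_sub M.submodule_zero_closed[OF U] M.submoduleE(4,5)[OF U]
    by (auto simp: single_valued_def)
  have "u = r \<odot>\<^bsub>N\<^esub> n" if "r \<in> carrier R" "(r \<odot>\<^bsub>M\<^esub> x, u) \<in> U \<times> {\<zero>\<^bsub>N\<^esub>}" for r u
    using that n(2)[of r] by auto
  then obtain G where G: "linear_graph R M N G" "U \<times> {\<zero>\<^bsub>N\<^esub>} \<subseteq> G" "(x, n) \<in> G"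
    using linear_graph_adjoin[OF M N G0 x(1) n(1)] adjoin_graph_extends[OF M N G0 x(1) n(1)] by blast
  obtain h where h: "h \<in> module_hom R M N" "\<And>y v. (y, v) \<in> G \<Longrightarrow> h y = v"
    using injective_module_extend[OF M N inj G(1)] by blast
  show ?thesis
  proof (rule that[OF h(1)])
    show "h u = \<zero>\<^bsub>N\<^esub>" if "u \<in> U" for u using h(2) G(2) that by blast
    show "h x \<noteq> \<zero>\<^bsub>N\<^esub>" using h(2)[OF G(3)] n(1,3) by simp
  qed
qed

end

section \<open>\<open>Hom_R(M, N)\<close> for coprime and prime modules\<close>

context module_rec
begin

lemma prime_module_smult_eq_zero:
  assumes "prime_module R M" "a \<in> carrier R" "x \<in> carrier M" "x \<noteq> \<zero>\<^bsub>M\<^esub>" "a \<odot>\<^bsub>M\<^esub> x = \<zero>\<^bsub>M\<^esub>"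
    and y: "y \<in> carrier M"
  shows "a \<odot>\<^bsub>M\<^esub> y = \<zero>\<^bsub>M\<^esub>"
proof -
  have Pa: "ideal (PIdl a) R" by (rule cgenideal_ideal[OF assms(2)])
  have "\<forall>c\<in>PIdl a. c \<odot>\<^bsub>M\<^esub> x = \<zero>\<^bsub>M\<^esub>"
    using assms(2,3,5) by (auto simp: cgenideal_def smult_assoc1)
  then have "ideal_elt R M (PIdl a) x = {\<zero>\<^bsub>M\<^esub>}" using ideal_elt_eq_zero_iff'[OF Pa assms(3)] by simp
  then have "ideal_mod R M (PIdl a) = {\<zero>\<^bsub>M\<^esub>}"
    using assms(1,3,4) Pa unfolding prime_module_def by blast
  then show ?thesis using smult_in_ideal_mod[where R=R, OF cgenideal_self[OF assms(2)] y] by simp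
qed

lemma prime_hom_module_of_coprime:
  assumes N: "module R N" and cp: "coprime_module R M"
  shows "prime_module R (hom_module R M N)"
  unfolding prime_module_def
proof (intro allI impI)
  let ?H = "hom_module R M N"
  interpret H: module_rec R ?H by (rule module_recI[OF hom_module_module[OF N]])
  fix I f assume "ideal I R \<and> f \<in> carrier ?H \<and> ideal_elt R ?H I f = {\<zero>\<^bsub>?H\<^esub>}"
  then have I: "ideal I R" and f: "f \<in> carrier ?H"
    and If: "\<forall>a\<in>I. \<forall>x\<in>carrier M. a \<odot>\<^bsub>N\<^esub> f x = \<zero>\<^bsub>N\<^esub>"
    using hom_module_ideal_elt_eq_zero_iff[OF N] by auto
  have Ic: "I \<subseteq> carrier R" using ideal.Icarr[OF I] by blast
  consider "ideal_mod R M I = {\<zero>\<^bsub>M\<^esub>}" | "ideal_mod R M I = carrier M"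
    using cp I unfolding coprime_module_def by blast
  then show "f = \<zero>\<^bsub>?H\<^esub> \<or> ideal_mod R ?H I = {\<zero>\<^bsub>?H\<^esub>}"
  proof cases
    case 1
    then show ?thesis using ideal_mod_hom_module_eq_zero[OF N Ic] by blast
  next
    case 2
    have fh: "f \<in> module_hom R M N" using f by (simp add: hom_module_simps)
    have "f (a \<odot>\<^bsub>M\<^esub> m) = \<zero>\<^bsub>N\<^esub>" if "a \<in> I" "m \<in> carrier M" for a m
      using If module_homD(3)[OF fh, of a m] that Ic by auto
    then have "f y = \<zero>\<^bsub>N\<^esub>" if "y \<in> carrier M" for y
      using module_hom_vanishes_on_ideal_mod[OF N fh Ic] that 2 by blast
    then have "f = \<zero>\<^bsub>?H\<^esub>" using f H.zero_closed by (intro hom_module_eqI) (auto simp: hom_module_simps)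
    then show ?thesis by blast
  qed
qed

lemma ideal_mod_eq_zero_of_hom_module:
  assumes N: "module R N" and inj: "injective_module R N" and cog: "cogenerator_module R N"
    and I: "I \<subseteq> carrier R" and HI: "ideal_mod R (hom_module R M N) I = {\<zero>\<^bsub>hom_module R M N\<^esub>}"
  shows "ideal_mod R M I = {\<zero>\<^bsub>M\<^esub>}"
  unfolding ideal_mod_eq_zero_iff'
proof (intro ballI)
  interpret H: module_rec R "hom_module R M N" by (rule module_recI[OF hom_module_module[OF N]])
  fix a y assume a: "a \<in> I" and y: "y \<in> carrier M"
  have ac: "a \<in> carrier R" using a I by blast
  show "a \<odot>\<^bsub>M\<^esub> y = \<zero>\<^bsub>M\<^esub>"
  proof (rule ccontr)
    assume "a \<odot>\<^bsub>M\<^esub> y \<noteq> \<zero>\<^bsub>M\<^esub>"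
    then obtain k where k: "k \<in> module_hom R M N" "k (a \<odot>\<^bsub>M\<^esub> y) \<noteq> \<zero>\<^bsub>N\<^esub>"
      using injective_cogenerator_separates[OF is_module N inj cog zero_submodule, of "a \<odot>\<^bsub>M\<^esub> y"] ac y
      by auto
    have "\<forall>b\<in>I. \<forall>g\<in>carrier (hom_module R M N). b \<odot>\<^bsub>hom_module R M N\<^esub> g = \<zero>\<^bsub>hom_module R M N\<^esub>"
      using HI H.ideal_mod_eq_zero_iff' by simp
    then have "a \<odot>\<^bsub>hom_module R M N\<^esub> restrict k (carrier M) = \<zero>\<^bsub>hom_module R M N\<^esub>"
      using a restrict_in_hom_module[OF k(1)] by simp
    then have "a \<odot>\<^bsub>N\<^esub> k y = \<zero>\<^bsub>N\<^esub>"
      using hom_module_smult_eq_zero_iff[OF restrict_in_hom_module[OF k(1)]] y by simp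
    moreover have "k (a \<odot>\<^bsub>M\<^esub> y) = a \<odot>\<^bsub>N\<^esub> k y" by (rule module_homD(3)[OF k(1) ac y])
    ultimately show False using k(2) by simp
  qed
qed

lemma coprime_of_prime_hom_module:
  assumes N: "module R N" and inj: "injective_module R N" and cog: "cogenerator_module R N"
    and pr: "prime_module R (hom_module R M N)"
  shows "coprime_module R M"
  unfolding coprime_module_def
proof (intro allI impI)
  let ?H = "hom_module R M N"
  interpret H: module_rec R ?H by (rule module_recI[OF hom_module_module[OF N]])
  fix I assume I: "ideal I R"
  have Ic: "I \<subseteq> carrier R" using ideal.Icarr[OF I] by blast
  show "ideal_mod R M I = {\<zero>\<^bsub>M\<^esub>} \<or> ideal_mod R M I = carrier M"
  proof (rule disjCI)
    assume "ideal_mod R M I \<noteq> carrier M"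
    then obtain x where x: "x \<in> carrier M" "x \<notin> ideal_mod R M I"
      using ideal_mod_subset_carrier[OF Ic] by blast
    obtain h where h: "h \<in> module_hom R M N" "\<And>u. u \<in> ideal_mod R M I \<Longrightarrow> h u = \<zero>\<^bsub>N\<^esub>"
        "h x \<noteq> \<zero>\<^bsub>N\<^esub>"
      using injective_cogenerator_separates[OF is_module N inj cog ideal_mod_submodule[OF Ic] x] by blast
    let ?f = "restrict h (carrier M)"
    have f: "?f \<in> carrier ?H" by (rule restrict_in_hom_module[OF h(1)])
    have "?f \<noteq> \<zero>\<^bsub>?H\<^esub>" using h(3) x(1) by (auto simp: hom_module_simps fun_eq_iff)
    moreover have "a \<odot>\<^bsub>N\<^esub> h y = \<zero>\<^bsub>N\<^esub>" if "a \<in> I" "y \<in> carrier M" for a y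
      using h(2)[OF smult_in_ideal_mod[OF that]] module_homD(3)[OF h(1), of a y] that Ic by auto
    then have "ideal_elt R ?H I ?f = {\<zero>\<^bsub>?H\<^esub>}"
      using hom_module_ideal_elt_eq_zero_iff[OF N I f] by simp
    ultimately have "ideal_mod R ?H I = {\<zero>\<^bsub>?H\<^esub>}"
      using pr I f unfolding prime_module_def by blast
    then show "ideal_mod R M I = {\<zero>\<^bsub>M\<^esub>}"
      by (rule ideal_mod_eq_zero_of_hom_module[OF N inj cog Ic])
  qed
qed

lemma smult_cancel:
  assumes a: "a \<in> carrier R"
    and a_inj: "\<And>x. x \<in> carrier M \<Longrightarrow> a \<odot>\<^bsub>M\<^esub> x = \<zero>\<^bsub>M\<^esub> \<Longrightarrow> x = \<zero>\<^bsub>M\<^esub>"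
    and xy: "x \<in> carrier M" "y \<in> carrier M" "a \<odot>\<^bsub>M\<^esub> x = a \<odot>\<^bsub>M\<^esub> y"
  shows "x = y"
proof -
  have "a \<odot>\<^bsub>M\<^esub> (x \<ominus>\<^bsub>M\<^esub> y) = a \<odot>\<^bsub>M\<^esub> x \<ominus>\<^bsub>M\<^esub> a \<odot>\<^bsub>M\<^esub> y"
    using xy a by (simp add: a_minus_def smult_r_distr smult_r_minus)
  then have "a \<odot>\<^bsub>M\<^esub> (x \<ominus>\<^bsub>M\<^esub> y) = \<zero>\<^bsub>M\<^esub>" using xy a by (simp add: minus_eq_zero_iff)
  then have "x \<ominus>\<^bsub>M\<^esub> y = \<zero>\<^bsub>M\<^esub>" using a_inj xy by simp
  then show ?thesis using xy by (simp add: minus_eq_zero_iff)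
qed

lemma linear_graph_smult_hom:
  assumes N: "module R N" and f: "f \<in> module_hom R M N" and a: "a \<in> carrier R"
    and a_inj: "\<And>x. x \<in> carrier M \<Longrightarrow> a \<odot>\<^bsub>M\<^esub> x = \<zero>\<^bsub>M\<^esub> \<Longrightarrow> x = \<zero>\<^bsub>M\<^esub>"
  shows "linear_graph R M N {(a \<odot>\<^bsub>M\<^esub> x, f x) | x. x \<in> carrier M}" (is "linear_graph R M N ?G")
  unfolding linear_graph_def
proof (intro conjI allI impI single_valuedI)
  show "?G \<subseteq> carrier M \<times> carrier N" using a module_homD(1)[OF f] by auto
  have "(\<zero>\<^bsub>M\<^esub>, \<zero>\<^bsub>N\<^esub>) = (a \<odot>\<^bsub>M\<^esub> \<zero>\<^bsub>M\<^esub>, f \<zero>\<^bsub>M\<^esub>)" using a module_hom_zero[OF N f] by simp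
  then show "(\<zero>\<^bsub>M\<^esub>, \<zero>\<^bsub>N\<^esub>) \<in> ?G" by blast
next
  fix p u v assume "(p, u) \<in> ?G" "(p, v) \<in> ?G"
  then show "u = v" using smult_cancel[OF a a_inj] by auto
next
  fix p u q v assume "(p, u) \<in> ?G" "(q, v) \<in> ?G"
  then obtain x y where "x \<in> carrier M" "y \<in> carrier M" "p = a \<odot>\<^bsub>M\<^esub> x" "u = f x"
      "q = a \<odot>\<^bsub>M\<^esub> y" "v = f y" by blast
  then have "(p \<oplus>\<^bsub>M\<^esub> q, u \<oplus>\<^bsub>N\<^esub> v) = (a \<odot>\<^bsub>M\<^esub> (x \<oplus>\<^bsub>M\<^esub> y), f (x \<oplus>\<^bsub>M\<^esub> y))"
    using a module_homD(2)[OF f] by (simp add: smult_r_distr)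
  then show "(p \<oplus>\<^bsub>M\<^esub> q, u \<oplus>\<^bsub>N\<^esub> v) \<in> ?G" using \<open>x \<in> carrier M\<close> \<open>y \<in> carrier M\<close> by blast
next
  fix r p u assume r: "r \<in> carrier R" and "(p, u) \<in> ?G"
  then obtain x where "x \<in> carrier M" "p = a \<odot>\<^bsub>M\<^esub> x" "u = f x" by blast
  then have "(r \<odot>\<^bsub>M\<^esub> p, r \<odot>\<^bsub>N\<^esub> u) = (a \<odot>\<^bsub>M\<^esub> (r \<odot>\<^bsub>M\<^esub> x), f (r \<odot>\<^bsub>M\<^esub> x))"
    using a r module_homD(3)[OF f] by (simp add: smult_comm)
  then show "(r \<odot>\<^bsub>M\<^esub> p, r \<odot>\<^bsub>N\<^esub> u) \<in> ?G" using r \<open>x \<in> carrier M\<close> by blast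
qed

text \<open>The map \<open>a x \<mapsto> f x\<close> on \<open>a M\<close> extends to \<open>g\<close> on \<open>M\<close> by injectivity of \<open>N\<close>, and then \<open>f = a g\<close>.\<close>
lemma hom_module_divisible:
  assumes N: "module R N" and inj: "injective_module R N" and a: "a \<in> carrier R"
    and a_inj: "\<And>x. x \<in> carrier M \<Longrightarrow> a \<odot>\<^bsub>M\<^esub> x = \<zero>\<^bsub>M\<^esub> \<Longrightarrow> x = \<zero>\<^bsub>M\<^esub>"
    and f: "f \<in> carrier (hom_module R M N)"
  obtains g where "g \<in> carrier (hom_module R M N)" "f = a \<odot>\<^bsub>hom_module R M N\<^esub> g"
proof -
  have fh: "f \<in> module_hom R M N" using f by (simp add: hom_module_simps)
  obtain h where h: "h \<in> module_hom R M N" "\<And>y v. (y, v) \<in> {(a \<odot>\<^bsub>M\<^esub> x, f x) | x. x \<in> carrier M} \<Longrightarrow> h y = v"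
    using injective_module_extend[OF is_module N inj linear_graph_smult_hom[OF N fh a a_inj]] by blast
  have g: "restrict h (carrier M) \<in> carrier (hom_module R M N)" by (rule restrict_in_hom_module[OF h(1)])
  have "f = a \<odot>\<^bsub>hom_module R M N\<^esub> restrict h (carrier M)"
  proof (rule hom_module_eqI[OF f module.smult_closed[OF hom_module_module[OF N] a g]])
    fix x assume x: "x \<in> carrier M"
    then have "(a \<odot>\<^bsub>M\<^esub> x, f x) \<in> {(a \<odot>\<^bsub>M\<^esub> x, f x) | x. x \<in> carrier M}" by blast
    then have "f x = h (a \<odot>\<^bsub>M\<^esub> x)" by (simp add: h(2))
    then show "f x = (a \<odot>\<^bsub>hom_module R M N\<^esub> restrict h (carrier M)) x"
      using module_homD(3)[OF h(1) a x] x by (simp add: hom_module_simps)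
  qed
  with g that show ?thesis by blast
qed

lemma coprime_hom_module_of_prime:
  assumes N: "module R N" and inj: "injective_module R N" and pr: "prime_module R M"
  shows "coprime_module R (hom_module R M N)"
  unfolding coprime_module_def
proof (intro allI impI)
  let ?H = "hom_module R M N"
  interpret H: module_rec R ?H by (rule module_recI[OF hom_module_module[OF N]])
  fix I assume I: "ideal I R"
  have Ic: "I \<subseteq> carrier R" using ideal.Icarr[OF I] by blast
  show "ideal_mod R ?H I = {\<zero>\<^bsub>?H\<^esub>} \<or> ideal_mod R ?H I = carrier ?H"
  proof (cases "\<exists>a\<in>I. \<forall>x\<in>carrier M. a \<odot>\<^bsub>M\<^esub> x = \<zero>\<^bsub>M\<^esub> \<longrightarrow> x = \<zero>\<^bsub>M\<^esub>")
    case True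
    then obtain a where a: "a \<in> I" "\<And>x. x \<in> carrier M \<Longrightarrow> a \<odot>\<^bsub>M\<^esub> x = \<zero>\<^bsub>M\<^esub> \<Longrightarrow> x = \<zero>\<^bsub>M\<^esub>"
      by blast
    have "f \<in> ideal_mod R ?H I" if f: "f \<in> carrier ?H" for f
    proof -
      obtain g where "g \<in> carrier ?H" "f = a \<odot>\<^bsub>?H\<^esub> g"
        using hom_module_divisible[OF N inj _ a(2) f] a(1) Ic by blast
      then show ?thesis using smult_in_ideal_mod[OF a(1)] by simp
    qed
    then show ?thesis using H.ideal_mod_subset_carrier[OF Ic] by blast
  next
    case False
    have "a \<odot>\<^bsub>M\<^esub> y = \<zero>\<^bsub>M\<^esub>" if "a \<in> I" "y \<in> carrier M" for a y
      using False prime_module_smult_eq_zero[OF pr] that Ic by blast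
    then show ?thesis
      using ideal_mod_hom_module_eq_zero[OF N Ic] ideal_mod_eq_zero_iff' by blast
  qed
qed

end

section \<open>Reduced and weakly prime cogenerators, coreduced and weakly coprime generators\<close>

definition von_neumann_regular :: "'a ring \<Rightarrow> bool" where
  "von_neumann_regular R \<longleftrightarrow> (\<forall>a\<in>carrier R. \<exists>r\<in>carrier R. a = r \<otimes>\<^bsub>R\<^esub> a \<otimes>\<^bsub>R\<^esub> a)"

context cring_rec
begin

lemma ideal_prod_PIdl_subset:
  assumes a: "a \<in> carrier R" and b: "b \<in> carrier R"
  shows "ideal_prod R (PIdl a) (PIdl b) \<subseteq> PIdl (a \<otimes> b)"
proof
  fix c assume "c \<in> ideal_prod R (PIdl a) (PIdl b)"
  then show "c \<in> PIdl (a \<otimes> b)"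
  proof induction
    case (prod i j)
    then obtain x y where xy: "x \<in> carrier R" "y \<in> carrier R" "i = x \<otimes> a" "j = y \<otimes> b"
      unfolding cgenideal_def by blast
    then have "i \<otimes> j = (x \<otimes> y) \<otimes> (a \<otimes> b)" using a b by (simp add: m_ac)
    then show ?case using xy unfolding cgenideal_def by blast
  next
    case (sum s1 s2)
    then obtain x y where xy: "x \<in> carrier R" "y \<in> carrier R" "s1 = x \<otimes> (a \<otimes> b)" "s2 = y \<otimes> (a \<otimes> b)"
      unfolding cgenideal_def by blast
    then have "s1 \<oplus> s2 = (x \<oplus> y) \<otimes> (a \<otimes> b)" using a b by (simp add: l_distr)
    then show ?case using xy unfolding cgenideal_def by blast
  qed
qed

lemma von_neumann_regular_ideal_prod:
  assumes vnr: "von_neumann_regular R" and I: "ideal I R" and J: "ideal J R" and IJ: "I \<subseteq> J"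
  shows "ideal_prod R I J = I"
proof
  show "ideal_prod R I J \<subseteq> I" using ideal_prod_inter[OF I J] by blast
  show "I \<subseteq> ideal_prod R I J"
  proof
    fix a assume a: "a \<in> I"
    then obtain r where r: "r \<in> carrier R" "a = r \<otimes> a \<otimes> a"
      using vnr ideal.Icarr[OF I] unfolding von_neumann_regular_def by blast
    have "r \<otimes> a \<in> I" using ideal.I_l_closed[OF I a r(1)] .
    then have "r \<otimes> a \<otimes> a \<in> ideal_prod R I J" using a IJ by (blast intro: ideal_prod.prod)
    then show "a \<in> ideal_prod R I J" using r(2) by simp
  qed
qed

end

context module_rec
begin

lemma ideal_elt_ideal_prod_PIdl_eq_zero:
  assumes a: "a \<in> carrier R" and b: "b \<in> carrier R" and m: "m \<in> carrier M"
    and abm: "(a \<otimes> b) \<odot>\<^bsub>M\<^esub> m = \<zero>\<^bsub>M\<^esub>"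
  shows "ideal_elt R M (ideal_prod R (PIdl a) (PIdl b)) m = {\<zero>\<^bsub>M\<^esub>}"
proof -
  have "c \<odot>\<^bsub>M\<^esub> m = \<zero>\<^bsub>M\<^esub>" if "c \<in> PIdl (a \<otimes> b)" for c
    using that a b m abm by (auto simp: cgenideal_def smult_assoc1)
  then show ?thesis
    using ideal_elt_eq_zero_iff'[OF ideal_prod_is_ideal[OF cgenideal_ideal[OF a] cgenideal_ideal[OF b]] m]
      ideal_prod_PIdl_subset[OF a b] by blast
qed

lemma weakly_prime_module_smult:
  assumes wp: "weakly_prime_module R M" and a: "a \<in> carrier R" and b: "b \<in> carrier R"
    and m: "m \<in> carrier M" and abm: "(a \<otimes> b) \<odot>\<^bsub>M\<^esub> m = \<zero>\<^bsub>M\<^esub>"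
  shows "a \<odot>\<^bsub>M\<^esub> m = \<zero>\<^bsub>M\<^esub> \<or> b \<odot>\<^bsub>M\<^esub> m = \<zero>\<^bsub>M\<^esub>"
proof -
  have Pa: "ideal (PIdl a) R" and Pb: "ideal (PIdl b) R" using a b by (simp_all add: cgenideal_ideal)
  have "ideal_elt R M (PIdl a) m = {\<zero>\<^bsub>M\<^esub>} \<or> ideal_elt R M (PIdl b) m = {\<zero>\<^bsub>M\<^esub>}"
    using wp[unfolded weakly_prime_module_def, rule_format, OF conjI[OF Pa conjI[OF Pb conjI[OF m
          ideal_elt_ideal_prod_PIdl_eq_zero[OF a b m abm]]]]] .
  then show ?thesis
    using ideal_elt_eq_zero_iff'[OF Pa m] ideal_elt_eq_zero_iff'[OF Pb m] cgenideal_self a b by auto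
qed

lemma reduced_module_smult:
  assumes red: "reduced_module R M" and a: "a \<in> carrier R"
    and m: "m \<in> carrier M" and aam: "(a \<otimes> a) \<odot>\<^bsub>M\<^esub> m = \<zero>\<^bsub>M\<^esub>"
  shows "a \<odot>\<^bsub>M\<^esub> m = \<zero>\<^bsub>M\<^esub>"
proof -
  have Pa: "ideal (PIdl a) R" using a by (simp add: cgenideal_ideal)
  have "ideal_elt R M (PIdl a) m = {\<zero>\<^bsub>M\<^esub>}"
    using red[unfolded reduced_module_def, rule_format, OF conjI[OF Pa conjI[OF m
          ideal_elt_ideal_prod_PIdl_eq_zero[OF a a m aam]]]] .
  then show ?thesis using ideal_elt_eq_zero_iff'[OF Pa m] cgenideal_self a by auto
qed

end

lemma reduced_of_weakly_prime: "weakly_prime_module R M \<Longrightarrow> reduced_module R M"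
  unfolding weakly_prime_module_def reduced_module_def by blast

context cring_rec
begin

lemma von_neumann_regular_of_reduced_cogenerator:
  assumes N: "module R N" and cog: "cogenerator_module R N" and red: "reduced_module R N"
  shows "von_neumann_regular R"
  unfolding von_neumann_regular_def
proof
  interpret N: module_rec R N by (rule module_recI[OF N])
  fix a assume a: "a \<in> carrier R"
  show "\<exists>r\<in>carrier R. a = r \<otimes> a \<otimes> a"
  proof (rule ccontr)
    assume "\<not> (\<exists>r\<in>carrier R. a = r \<otimes> a \<otimes> a)"
    then have "a \<notin> PIdl (a \<otimes> a)" using a by (auto simp: cgenideal_def m_assoc)
    then obtain m where m: "m \<in> carrier N" "\<And>c. c \<in> PIdl (a \<otimes> a) \<Longrightarrow> c \<odot>\<^bsub>N\<^esub> m = \<zero>\<^bsub>N\<^esub>"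
        "a \<odot>\<^bsub>N\<^esub> m \<noteq> \<zero>\<^bsub>N\<^esub>"
      using cogenerator_annihilator_witness[OF N cog cgenideal_ideal[of "a \<otimes> a"]] a by blast
    have "(a \<otimes> a) \<odot>\<^bsub>N\<^esub> m = \<zero>\<^bsub>N\<^esub>" using m(2) cgenideal_self a by simp
    then show False using N.reduced_module_smult[OF red a m(1)] m(3) by simp
  qed
qed

text \<open>For \<open>a \<in> I - J\<close> and \<open>b \<in> J - I\<close>, neither \<open>a\<close> nor \<open>b\<close> lies in \<open>R a b\<close>; the cogenerator provides
  \<open>m\<^sub>1\<close> and \<open>m\<^sub>2\<close> killed by \<open>a b\<close> with \<open>a m\<^sub>1 \<noteq> 0\<close> and \<open>b m\<^sub>2 \<noteq> 0\<close>, and then \<open>m\<^sub>1 + m\<^sub>2\<close> violates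
  weak primeness.\<close>
lemma ideals_chain_of_weakly_prime_cogenerator:
  assumes N: "module R N" and cog: "cogenerator_module R N" and wp: "weakly_prime_module R N"
    and I: "ideal I R" and J: "ideal J R"
  shows "I \<subseteq> J \<or> J \<subseteq> I"
proof (rule ccontr)
  interpret N: module_rec R N by (rule module_recI[OF N])
  assume "\<not> (I \<subseteq> J \<or> J \<subseteq> I)"
  then obtain a b where ab: "a \<in> I" "a \<notin> J" "b \<in> J" "b \<notin> I" by blast
  have a: "a \<in> carrier R" and b: "b \<in> carrier R"
    using ideal.Icarr[OF I ab(1)] ideal.Icarr[OF J ab(3)] .
  have "x \<otimes> (a \<otimes> b) \<in> J" "x \<otimes> (a \<otimes> b) \<in> I" if x: "x \<in> carrier R" for x
  proof -
    have "x \<otimes> (a \<otimes> b) = (x \<otimes> a) \<otimes> b" "x \<otimes> (a \<otimes> b) = (x \<otimes> b) \<otimes> a"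
      using x a b by (simp_all add: m_ac)
    then show "x \<otimes> (a \<otimes> b) \<in> J" "x \<otimes> (a \<otimes> b) \<in> I"
      using ideal.I_l_closed[OF J ab(3), of "x \<otimes> a"] ideal.I_l_closed[OF I ab(1), of "x \<otimes> b"] x a b
      by simp_all
  qed
  then have "PIdl (a \<otimes> b) \<subseteq> I \<inter> J" unfolding cgenideal_def by blast
  then have "a \<notin> PIdl (a \<otimes> b)" "b \<notin> PIdl (a \<otimes> b)" using ab by auto
  then obtain m1 m2 where
    m1: "m1 \<in> carrier N" "\<And>c. c \<in> PIdl (a \<otimes> b) \<Longrightarrow> c \<odot>\<^bsub>N\<^esub> m1 = \<zero>\<^bsub>N\<^esub>" "a \<odot>\<^bsub>N\<^esub> m1 \<noteq> \<zero>\<^bsub>N\<^esub>" and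
    m2: "m2 \<in> carrier N" "\<And>c. c \<in> PIdl (a \<otimes> b) \<Longrightarrow> c \<odot>\<^bsub>N\<^esub> m2 = \<zero>\<^bsub>N\<^esub>" "b \<odot>\<^bsub>N\<^esub> m2 \<noteq> \<zero>\<^bsub>N\<^esub>"
    using cogenerator_annihilator_witness[OF N cog cgenideal_ideal[of "a \<otimes> b"]] a b by (metis m_closed)
  have ab1: "(a \<otimes> b) \<odot>\<^bsub>N\<^esub> m1 = \<zero>\<^bsub>N\<^esub>" and ab2: "(a \<otimes> b) \<odot>\<^bsub>N\<^esub> m2 = \<zero>\<^bsub>N\<^esub>"
    using m1(2) m2(2) cgenideal_self a b by simp_all
  have b1: "b \<odot>\<^bsub>N\<^esub> m1 = \<zero>\<^bsub>N\<^esub>" using N.weakly_prime_module_smult[OF wp a b m1(1) ab1] m1(3) by simp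
  have a2: "a \<odot>\<^bsub>N\<^esub> m2 = \<zero>\<^bsub>N\<^esub>" using N.weakly_prime_module_smult[OF wp a b m2(1) ab2] m2(3) by simp
  have "(a \<otimes> b) \<odot>\<^bsub>N\<^esub> (m1 \<oplus>\<^bsub>N\<^esub> m2) = \<zero>\<^bsub>N\<^esub>"
    using ab1 ab2 a b m1(1) m2(1) by (simp add: N.smult_r_distr)
  then have "a \<odot>\<^bsub>N\<^esub> (m1 \<oplus>\<^bsub>N\<^esub> m2) = \<zero>\<^bsub>N\<^esub> \<or> b \<odot>\<^bsub>N\<^esub> (m1 \<oplus>\<^bsub>N\<^esub> m2) = \<zero>\<^bsub>N\<^esub>"
    using N.weakly_prime_module_smult[OF wp a b] m1(1) m2(1) by simp
  then show False using b1 a2 m1 m2 a b by (simp add: N.smult_r_distr)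
qed

lemma coreduced_of_reduced_cogenerator:
  assumes N: "module R N" and cog: "cogenerator_module R N" and red: "reduced_module R N"
  shows "coreduced_module R N"
  unfolding coreduced_module_def
  using von_neumann_regular_ideal_prod[OF von_neumann_regular_of_reduced_cogenerator[OF N cog red]]
  by simp

lemma weakly_coprime_of_weakly_prime_cogenerator:
  assumes N: "module R N" and cog: "cogenerator_module R N" and wp: "weakly_prime_module R N"
  shows "weakly_coprime_module R N"
  unfolding weakly_coprime_module_def
proof (intro allI impI)
  fix I J assume "ideal I R \<and> ideal J R"
  then have I: "ideal I R" and J: "ideal J R" by auto
  have vnr: "von_neumann_regular R"
    by (rule von_neumann_regular_of_reduced_cogenerator[OF N cog reduced_of_weakly_prime[OF wp]])
  have "ideal_prod R I J = I \<or> ideal_prod R I J = J"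
    using ideals_chain_of_weakly_prime_cogenerator[OF N cog wp I J]
      von_neumann_regular_ideal_prod[OF vnr I J] von_neumann_regular_ideal_prod[OF vnr J I]
      ideal_prod_commute[OF I J] by auto
  then show "ideal_mod R N (ideal_prod R I J) = ideal_mod R N I
    \<or> ideal_mod R N (ideal_prod R I J) = ideal_mod R N J" by auto
qed

end

context module_rec
begin

text \<open>A generator detects ideals: mapping \<open>M\<close> to \<open>R/J\<close> shows that \<open>I M \<subseteq> J M\<close> forces \<open>I\<close> to kill \<open>R/J\<close>.\<close>
lemma generator_ideal_mod_subset:
  assumes gen: "generator_module R M" and I: "ideal I R" and J: "ideal J R"
    and sub: "ideal_mod R M I \<subseteq> ideal_mod R M J"
  shows "I \<subseteq> J"
proof
  fix a assume aI: "a \<in> I"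
  have a: "a \<in> carrier R" using ideal.Icarr[OF I aI] .
  have Jc: "J \<subseteq> carrier R" using ideal.Icarr[OF J] by blast
  let ?T = "list_quot R J"
  have T: "module R ?T" by (rule list_quot_module[OF J])
  interpret T: module_rec R ?T by (rule module_recI[OF T])
  have "a \<odot>\<^bsub>?T\<^esub> X = \<zero>\<^bsub>?T\<^esub>" if X: "X \<in> \<Union>{f ` carrier M | f. f \<in> module_hom R M ?T}" for X
  proof -
    obtain f y where f: "f \<in> module_hom R M ?T" and y: "y \<in> carrier M" and X: "X = f y"
      using X by blast
    have kill: "f (b \<odot>\<^bsub>M\<^esub> m) = \<zero>\<^bsub>?T\<^esub>" if "b \<in> J" "m \<in> carrier M" for b m
      using module_homD[OF f] list_quot_annihilated[OF J] that Jc by auto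
    have ay: "a \<odot>\<^bsub>M\<^esub> y \<in> ideal_mod R M J" using sub smult_in_ideal_mod[OF aI y] by blast
    have "f (a \<odot>\<^bsub>M\<^esub> y) = \<zero>\<^bsub>?T\<^esub>"
      by (rule module_hom_vanishes_on_ideal_mod[OF T f Jc _ ay]) (rule kill)
    then show ?thesis using module_homD(3)[OF f a y] X by simp
  qed
  note ann = this
  have gen_T: "carrier ?T = gen_submod R ?T (\<Union>{f ` carrier M | f. f \<in> module_hom R M ?T})"
    by (rule gen[unfolded generator_module_def, rule_format, OF T])
  have gens: "\<Union>{f ` carrier M | f. f \<in> module_hom R M ?T} \<subseteq> carrier ?T"
    by (auto dest: module_homD(1))
  have "a \<odot>\<^bsub>?T\<^esub> X = \<zero>\<^bsub>?T\<^esub>" if X: "X \<in> carrier ?T" for X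
  proof (rule T.gen_submod_annihilated[OF a gens])
    show "X \<in> gen_submod R ?T (\<Union>{f ` carrier M | f. f \<in> module_hom R M ?T})" using X gen_T by simp
  qed (rule ann)
  then have "a \<odot>\<^bsub>?T\<^esub> list_coset R J \<one> = \<zero>\<^bsub>?T\<^esub>" by (simp add: list_quot_carrier)
  then show "a \<in> J" using list_quot_smult[OF J a one_closed] list_coset_eq_zero_iff[OF J a] a by simp
qed

lemma generator_ideal_prod_eq:
  assumes gen: "generator_module R M" and I: "ideal I R" and J: "ideal J R"
    and eq: "ideal_mod R M (ideal_prod R I J) = ideal_mod R M I"
  shows "ideal_prod R I J = I"
  using generator_ideal_mod_subset[OF gen I ideal_prod_is_ideal[OF I J]] eq ideal_prod_inter[OF I J]
  by blast

lemma reduced_of_coreduced_generator: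
  assumes gen: "generator_module R M" and cr: "coreduced_module R M"
  shows "reduced_module R M"
  unfolding reduced_module_def
proof (intro allI impI)
  fix I m assume h: "ideal I R \<and> m \<in> carrier M \<and> ideal_elt R M (ideal_prod R I I) m = {\<zero>\<^bsub>M\<^esub>}"
  then have "ideal_prod R I I = I"
    using generator_ideal_prod_eq[OF gen] cr unfolding coreduced_module_def by metis
  then show "ideal_elt R M I m = {\<zero>\<^bsub>M\<^esub>}" using h by simp
qed

lemma weakly_prime_of_weakly_coprime_generator:
  assumes gen: "generator_module R M" and wc: "weakly_coprime_module R M"
  shows "weakly_prime_module R M"
  unfolding weakly_prime_module_def
proof (intro allI impI)
  fix I J m assume h: "ideal I R \<and> ideal J R \<and> m \<in> carrier M
    \<and> ideal_elt R M (ideal_prod R I J) m = {\<zero>\<^bsub>M\<^esub>}"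
  then have I: "ideal I R" and J: "ideal J R" by auto
  have "ideal_prod R I J = I \<or> ideal_prod R J I = J"
    using wc I J generator_ideal_prod_eq[OF gen I J] generator_ideal_prod_eq[OF gen J I]
      ideal_prod_commute[OF I J] unfolding weakly_coprime_module_def by metis
  then show "ideal_elt R M I m = {\<zero>\<^bsub>M\<^esub>} \<or> ideal_elt R M J m = {\<zero>\<^bsub>M\<^esub>}"
    using h ideal_prod_commute[OF I J] by auto
qed

end

section \<open>Localization\<close>

lemma self_module_simps:
  "carrier (self_module R) = carrier R" "\<zero>\<^bsub>self_module R\<^esub> = \<zero>\<^bsub>R\<^esub>"
  "x \<oplus>\<^bsub>self_module R\<^esub> y = x \<oplus>\<^bsub>R\<^esub> y" "a \<odot>\<^bsub>self_module R\<^esub> x = a \<otimes>\<^bsub>R\<^esub> x"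
  unfolding self_module_def by simp_all

lemma (in cring_rec) self_module_module: "module R (self_module R)"
proof (rule moduleI)
  show "abelian_group (self_module R)"
  proof (rule abelian_groupI)
    fix x assume "x \<in> carrier (self_module R)"
    then show "\<exists>y\<in>carrier (self_module R). y \<oplus>\<^bsub>self_module R\<^esub> x = \<zero>\<^bsub>self_module R\<^esub>"
      by (intro bexI[of _ "\<ominus> x"]) (auto simp: self_module_simps l_neg)
  qed (auto simp: self_module_simps a_ac)
qed (auto simp: self_module_simps l_distr r_distr m_assoc is_cring)

locale localization = cring_rec +
  fixes S :: "'a set"
  assumes S_sub: "S \<subseteq> carrier R" and one_S: "\<one> \<in> S"
    and S_mult: "s \<in> S \<Longrightarrow> t \<in> S \<Longrightarrow> s \<otimes> t \<in> S"

lemma (in cring_rec) localization_at_prime: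
  assumes "primeideal P R"
  shows "localization R (carrier R - P)"
proof
  interpret P: primeideal P R by (rule assms)
  show "\<one> \<in> carrier R - P" using P.I_notcarr P.one_imp_carrier by blast
  show "s \<otimes> t \<in> carrier R - P" if "s \<in> carrier R - P" "t \<in> carrier R - P" for s t
    using that P.I_prime by auto
qed auto

locale module_localization = localization R S + M: module_rec R M
  for R :: "'a ring" (structure) and S and M :: "('a, 'm) module"
begin

abbreviation "mfrac \<equiv> loc_cls R S M"
abbreviation "locM \<equiv> loc_module R S M"

definition frac_eq :: "'m \<Rightarrow> 'a \<Rightarrow> 'm \<Rightarrow> 'a \<Rightarrow> bool" where
  "frac_eq m s n t \<longleftrightarrow> (\<exists>u\<in>S. (u \<otimes> t) \<odot>\<^bsub>M\<^esub> m = (u \<otimes> s) \<odot>\<^bsub>M\<^esub> n)"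

lemma S_carrier: "s \<in> S \<Longrightarrow> s \<in> carrier R"
  using S_sub by blast

lemma frac_mem_iff:
  assumes "m \<in> carrier M" "s \<in> S"
  shows "(n, t) \<in> mfrac m s \<longleftrightarrow> n \<in> carrier M \<and> t \<in> S \<and> frac_eq m s n t"
proof -
  have "u \<odot>\<^bsub>M\<^esub> (t \<odot>\<^bsub>M\<^esub> m \<ominus>\<^bsub>M\<^esub> s \<odot>\<^bsub>M\<^esub> n) = (u \<otimes> t) \<odot>\<^bsub>M\<^esub> m \<ominus>\<^bsub>M\<^esub> (u \<otimes> s) \<odot>\<^bsub>M\<^esub> n"
    if "u \<in> S" "t \<in> S" "n \<in> carrier M" for u t n
    using that assms S_carrier
    by (simp add: a_minus_def M.smult_r_distr M.smult_r_minus M.smult_assoc1)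
  then show ?thesis
    unfolding loc_cls_def frac_eq_def using assms S_carrier by (auto simp: M.minus_eq_zero_iff)
qed

lemma frac_eq_refl: "frac_eq m s m s"
  unfolding frac_eq_def using one_S by blast

lemma frac_eq_sym: "frac_eq m s n t \<Longrightarrow> frac_eq n t m s"
  unfolding frac_eq_def by metis

lemma smult_eq_cong:
  "\<lbrakk>a \<odot>\<^bsub>M\<^esub> m = b \<odot>\<^bsub>M\<^esub> n; a \<in> carrier R; b \<in> carrier R; c \<in> carrier R; m \<in> carrier M; n \<in> carrier M\<rbrakk>
   \<Longrightarrow> (c \<otimes> a) \<odot>\<^bsub>M\<^esub> m = (c \<otimes> b) \<odot>\<^bsub>M\<^esub> n"
  by (simp add: M.smult_assoc1)

lemma frac_eq_trans:
  assumes "frac_eq m s n t" "frac_eq n t p w" "m \<in> carrier M" "n \<in> carrier M" "p \<in> carrier M"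
    "s \<in> S" "t \<in> S" "w \<in> S"
  shows "frac_eq m s p w"
proof -
  obtain u where u: "u \<in> S" "(u \<otimes> t) \<odot>\<^bsub>M\<^esub> m = (u \<otimes> s) \<odot>\<^bsub>M\<^esub> n"
    using assms(1) unfolding frac_eq_def by blast
  obtain u' where u': "u' \<in> S" "(u' \<otimes> w) \<odot>\<^bsub>M\<^esub> n = (u' \<otimes> t) \<odot>\<^bsub>M\<^esub> p"
    using assms(2) unfolding frac_eq_def by blast
  have c: "u \<in> carrier R" "u' \<in> carrier R" "s \<in> carrier R" "t \<in> carrier R" "w \<in> carrier R"
    using u u' assms S_carrier by auto
  define v where "v = u \<otimes> u' \<otimes> t"
  have "(v \<otimes> w) \<odot>\<^bsub>M\<^esub> m = ((u' \<otimes> w) \<otimes> (u \<otimes> t)) \<odot>\<^bsub>M\<^esub> m" using c by (simp add: v_def m_ac)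
  also have "\<dots> = ((u' \<otimes> w) \<otimes> (u \<otimes> s)) \<odot>\<^bsub>M\<^esub> n" by (rule smult_eq_cong[OF u(2)]) (use c assms in auto)
  also have "\<dots> = ((u \<otimes> s) \<otimes> (u' \<otimes> w)) \<odot>\<^bsub>M\<^esub> n" using c by (simp add: m_ac)
  also have "\<dots> = ((u \<otimes> s) \<otimes> (u' \<otimes> t)) \<odot>\<^bsub>M\<^esub> p" by (rule smult_eq_cong[OF u'(2)]) (use c assms in auto)
  also have "\<dots> = (v \<otimes> s) \<odot>\<^bsub>M\<^esub> p" using c by (simp add: v_def m_ac)
  finally show ?thesis
    unfolding frac_eq_def v_def using u u' assms S_mult by blast
qed

lemma frac_eq_iff:
  assumes "m \<in> carrier M" "s \<in> S" "n \<in> carrier M" "t \<in> S"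
  shows "mfrac m s = mfrac n t \<longleftrightarrow> frac_eq m s n t"
proof
  assume "mfrac m s = mfrac n t"
  then show "frac_eq m s n t" using frac_mem_iff assms frac_eq_refl by blast
next
  assume "frac_eq m s n t"
  then have "(q, w) \<in> mfrac m s \<longleftrightarrow> (q, w) \<in> mfrac n t" for q w
    unfolding frac_mem_iff[OF assms(1,2)] frac_mem_iff[OF assms(3,4)]
    using assms frac_eq_trans frac_eq_sym by meson
  then show "mfrac m s = mfrac n t" by auto
qed

lemma frac_self_mem: "m \<in> carrier M \<Longrightarrow> s \<in> S \<Longrightarrow> (m, s) \<in> mfrac m s"
  using frac_mem_iff frac_eq_refl by simp

lemma frac_eq_add:
  assumes m: "m \<in> carrier M" "m' \<in> carrier M" and n: "n \<in> carrier M" "n' \<in> carrier M"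
    and s: "s \<in> S" "s' \<in> S" and t: "t \<in> S" "t' \<in> S"
    and "frac_eq m s m' s'" "frac_eq n t n' t'"
  shows "frac_eq (t \<odot>\<^bsub>M\<^esub> m \<oplus>\<^bsub>M\<^esub> s \<odot>\<^bsub>M\<^esub> n) (s \<otimes> t) (t' \<odot>\<^bsub>M\<^esub> m' \<oplus>\<^bsub>M\<^esub> s' \<odot>\<^bsub>M\<^esub> n') (s' \<otimes> t')"
proof -
  obtain u1 where u1: "u1 \<in> S" "(u1 \<otimes> s') \<odot>\<^bsub>M\<^esub> m = (u1 \<otimes> s) \<odot>\<^bsub>M\<^esub> m'"
    using assms(9) unfolding frac_eq_def by blast
  obtain u2 where u2: "u2 \<in> S" "(u2 \<otimes> t') \<odot>\<^bsub>M\<^esub> n = (u2 \<otimes> t) \<odot>\<^bsub>M\<^esub> n'"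
    using assms(10) unfolding frac_eq_def by blast
  have c: "u1 \<in> carrier R" "u2 \<in> carrier R" "s \<in> carrier R" "t \<in> carrier R" "s' \<in> carrier R"
    "t' \<in> carrier R"
    using u1 u2 s t S_carrier by auto
  define v where "v = u1 \<otimes> u2"
  have v: "v \<in> S" "v \<in> carrier R" unfolding v_def using u1 u2 S_mult c by auto
  have e1: "(v \<otimes> (s' \<otimes> t') \<otimes> t) \<odot>\<^bsub>M\<^esub> m = (v \<otimes> (s \<otimes> t) \<otimes> t') \<odot>\<^bsub>M\<^esub> m'"
    using smult_eq_cong[OF u1(2), of "u2 \<otimes> t' \<otimes> t"] c m by (simp add: v_def m_ac)
  have e2: "(v \<otimes> (s' \<otimes> t') \<otimes> s) \<odot>\<^bsub>M\<^esub> n = (v \<otimes> (s \<otimes> t) \<otimes> s') \<odot>\<^bsub>M\<^esub> n'"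
    using smult_eq_cong[OF u2(2), of "u1 \<otimes> s' \<otimes> s"] c n by (simp add: v_def m_ac)
  have "(v \<otimes> (s' \<otimes> t')) \<odot>\<^bsub>M\<^esub> (t \<odot>\<^bsub>M\<^esub> m \<oplus>\<^bsub>M\<^esub> s \<odot>\<^bsub>M\<^esub> n)
      = (v \<otimes> (s' \<otimes> t') \<otimes> t) \<odot>\<^bsub>M\<^esub> m \<oplus>\<^bsub>M\<^esub> (v \<otimes> (s' \<otimes> t') \<otimes> s) \<odot>\<^bsub>M\<^esub> n"
    using c v m n by (simp add: M.smult_r_distr M.smult_assoc1)
  also have "\<dots> = (v \<otimes> (s \<otimes> t) \<otimes> t') \<odot>\<^bsub>M\<^esub> m' \<oplus>\<^bsub>M\<^esub> (v \<otimes> (s \<otimes> t) \<otimes> s') \<odot>\<^bsub>M\<^esub> n'"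
    using e1 e2 by simp
  also have "\<dots> = (v \<otimes> (s \<otimes> t)) \<odot>\<^bsub>M\<^esub> (t' \<odot>\<^bsub>M\<^esub> m' \<oplus>\<^bsub>M\<^esub> s' \<odot>\<^bsub>M\<^esub> n')"
    using c v m n by (simp add: M.smult_r_distr M.smult_assoc1)
  finally show ?thesis unfolding frac_eq_def using v(1) by blast
qed

lemma loc_module_simps:
  "carrier locM = loc_carrier R S M" "\<zero>\<^bsub>locM\<^esub> = mfrac \<zero>\<^bsub>M\<^esub> \<one>"
  "X \<oplus>\<^bsub>locM\<^esub> Y = loc_add R S M X Y"
  "A \<odot>\<^bsub>locM\<^esub> X = (SOME Z. \<exists>a s m t. (a, s) \<in> A \<and> (m, t) \<in> X \<and> Z = mfrac (a \<odot>\<^bsub>M\<^esub> m) (s \<otimes> t))"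
  by (simp_all add: loc_module_def)

lemma frac_add:
  assumes m: "m \<in> carrier M" and s: "s \<in> S" and n: "n \<in> carrier M" and t: "t \<in> S"
  shows "mfrac m s \<oplus>\<^bsub>locM\<^esub> mfrac n t = mfrac (t \<odot>\<^bsub>M\<^esub> m \<oplus>\<^bsub>M\<^esub> s \<odot>\<^bsub>M\<^esub> n) (s \<otimes> t)"
  unfolding loc_module_simps(3) loc_add_def
proof (rule some_equality)
  show "\<exists>m' s' n' t'. (m', s') \<in> mfrac m s \<and> (n', t') \<in> mfrac n t \<and>
      mfrac (t \<odot>\<^bsub>M\<^esub> m \<oplus>\<^bsub>M\<^esub> s \<odot>\<^bsub>M\<^esub> n) (s \<otimes> t) = mfrac (t' \<odot>\<^bsub>M\<^esub> m' \<oplus>\<^bsub>M\<^esub> s' \<odot>\<^bsub>M\<^esub> n') (s' \<otimes> t')"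
    using frac_self_mem assms by blast
next
  fix Z assume "\<exists>m' s' n' t'. (m', s') \<in> mfrac m s \<and> (n', t') \<in> mfrac n t \<and>
      Z = mfrac (t' \<odot>\<^bsub>M\<^esub> m' \<oplus>\<^bsub>M\<^esub> s' \<odot>\<^bsub>M\<^esub> n') (s' \<otimes> t')"
  then obtain m' s' n' t' where h: "(m', s') \<in> mfrac m s" "(n', t') \<in> mfrac n t"
      "Z = mfrac (t' \<odot>\<^bsub>M\<^esub> m' \<oplus>\<^bsub>M\<^esub> s' \<odot>\<^bsub>M\<^esub> n') (s' \<otimes> t')" by blast
  have c: "m' \<in> carrier M" "s' \<in> S" "frac_eq m s m' s'" "n' \<in> carrier M" "t' \<in> S" "frac_eq n t n' t'"
    using h(1,2) frac_mem_iff m s n t by auto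
  then show "Z = mfrac (t \<odot>\<^bsub>M\<^esub> m \<oplus>\<^bsub>M\<^esub> s \<odot>\<^bsub>M\<^esub> n) (s \<otimes> t)"
    using h(3) frac_eq_iff frac_eq_sym[OF frac_eq_add] assms S_mult S_carrier by auto
qed

lemma frac_in_carrier: "m \<in> carrier M \<Longrightarrow> s \<in> S \<Longrightarrow> mfrac m s \<in> carrier locM"
  unfolding loc_module_simps loc_carrier_def by blast

lemma loc_module_carrierE:
  assumes "X \<in> carrier locM"
  obtains m s where "m \<in> carrier M" "s \<in> S" "X = mfrac m s"
  using assms unfolding loc_module_simps loc_carrier_def by blast

lemma frac_eq_zero_iff:
  assumes "m \<in> carrier M" "s \<in> S"
  shows "mfrac m s = \<zero>\<^bsub>locM\<^esub> \<longleftrightarrow> (\<exists>u\<in>S. u \<odot>\<^bsub>M\<^esub> m = \<zero>\<^bsub>M\<^esub>)"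
proof -
  have "mfrac m s = \<zero>\<^bsub>locM\<^esub> \<longleftrightarrow> frac_eq m s \<zero>\<^bsub>M\<^esub> \<one>"
    using frac_eq_iff assms one_S by (simp add: loc_module_simps)
  also have "\<dots> \<longleftrightarrow> (\<exists>u\<in>S. u \<odot>\<^bsub>M\<^esub> m = \<zero>\<^bsub>M\<^esub>)"
    unfolding frac_eq_def using assms S_carrier by auto
  finally show ?thesis .
qed

lemma frac_zero: "v \<in> S \<Longrightarrow> mfrac \<zero>\<^bsub>M\<^esub> v = \<zero>\<^bsub>locM\<^esub>"
  using frac_eq_zero_iff[of "\<zero>\<^bsub>M\<^esub>" v] one_S S_carrier by auto

end

context module_localization
begin

lemma self_module_localization: "module_localization R S (self_module R)"
  by (intro module_localization.intro module_recI self_module_module) unfold_locales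

sublocale RR: module_localization R S "self_module R"
  by (rule self_module_localization)

abbreviation "rfrac \<equiv> loc_cls R S (self_module R)"
abbreviation "locR \<equiv> loc_ring R S"

lemma RR_frac_eq_iff: "RR.frac_eq a s b t \<longleftrightarrow> (\<exists>u\<in>S. (u \<otimes> t) \<otimes> a = (u \<otimes> s) \<otimes> b)"
  unfolding RR.frac_eq_def by (simp add: self_module_simps)

lemma frac_eq_smult:
  assumes a: "a \<in> carrier R" "a' \<in> carrier R" and m: "m \<in> carrier M" "m' \<in> carrier M"
    and S: "s \<in> S" "s' \<in> S" "t \<in> S" "t' \<in> S"
    and "RR.frac_eq a s a' s'" "frac_eq m t m' t'"
  shows "frac_eq (a \<odot>\<^bsub>M\<^esub> m) (s \<otimes> t) (a' \<odot>\<^bsub>M\<^esub> m') (s' \<otimes> t')"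
proof -
  obtain u1 where u1: "u1 \<in> S" "(u1 \<otimes> s') \<otimes> a = (u1 \<otimes> s) \<otimes> a'"
    using assms(9) unfolding RR_frac_eq_iff by blast
  obtain u2 where u2: "u2 \<in> S" "(u2 \<otimes> t') \<odot>\<^bsub>M\<^esub> m = (u2 \<otimes> t) \<odot>\<^bsub>M\<^esub> m'"
    using assms(10) unfolding frac_eq_def by blast
  have c: "u1 \<in> carrier R" "u2 \<in> carrier R" "s \<in> carrier R" "t \<in> carrier R" "s' \<in> carrier R"
    "t' \<in> carrier R"
    using u1 u2 S S_carrier by auto
  define v where "v = u1 \<otimes> u2"
  have "(v \<otimes> (s \<otimes> t)) \<odot>\<^bsub>M\<^esub> (a' \<odot>\<^bsub>M\<^esub> m') = (((u1 \<otimes> s) \<otimes> a') \<otimes> (u2 \<otimes> t)) \<odot>\<^bsub>M\<^esub> m'"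
    using c a m by (simp add: v_def M.smult_assoc1[symmetric] m_ac)
  also have "\<dots> = (((u1 \<otimes> s) \<otimes> a') \<otimes> (u2 \<otimes> t')) \<odot>\<^bsub>M\<^esub> m"
    by (rule smult_eq_cong[OF u2(2)[symmetric]]) (use c a m in auto)
  also have "\<dots> = (((u1 \<otimes> s') \<otimes> a) \<otimes> (u2 \<otimes> t')) \<odot>\<^bsub>M\<^esub> m" using u1(2) by simp
  also have "\<dots> = (v \<otimes> (s' \<otimes> t')) \<odot>\<^bsub>M\<^esub> (a \<odot>\<^bsub>M\<^esub> m)"
    using c a m by (simp add: v_def M.smult_assoc1[symmetric] m_ac)
  finally show ?thesis
    unfolding frac_eq_def v_def using u1 u2 S_mult by metis
qed

lemma frac_smult:
  assumes a: "a \<in> carrier R" and s: "s \<in> S" and m: "m \<in> carrier M" and t: "t \<in> S"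
  shows "rfrac a s \<odot>\<^bsub>locM\<^esub> mfrac m t = mfrac (a \<odot>\<^bsub>M\<^esub> m) (s \<otimes> t)"
  unfolding loc_module_simps(4)
proof (rule some_equality)
  have "a \<in> carrier (self_module R)" using a by (simp add: self_module_simps)
  then show "\<exists>a' s' m' t'. (a', s') \<in> rfrac a s \<and> (m', t') \<in> mfrac m t \<and>
      mfrac (a \<odot>\<^bsub>M\<^esub> m) (s \<otimes> t) = mfrac (a' \<odot>\<^bsub>M\<^esub> m') (s' \<otimes> t')"
    using frac_self_mem[OF m t] RR.frac_self_mem s by blast
next
  fix Z assume "\<exists>a' s' m' t'. (a', s') \<in> rfrac a s \<and> (m', t') \<in> mfrac m t \<and>
      Z = mfrac (a' \<odot>\<^bsub>M\<^esub> m') (s' \<otimes> t')"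
  then obtain a' s' m' t' where h: "(a', s') \<in> rfrac a s" "(m', t') \<in> mfrac m t"
      "Z = mfrac (a' \<odot>\<^bsub>M\<^esub> m') (s' \<otimes> t')" by blast
  have c: "a' \<in> carrier R" "s' \<in> S" "RR.frac_eq a s a' s'" "m' \<in> carrier M" "t' \<in> S" "frac_eq m t m' t'"
    using h(1,2) RR.frac_mem_iff frac_mem_iff a s m t by (auto simp: self_module_simps)
  then show "Z = mfrac (a \<odot>\<^bsub>M\<^esub> m) (s \<otimes> t)"
    using h(3) frac_eq_iff frac_eq_sym[OF frac_eq_smult] assms S_mult by auto
qed

lemma loc_ring_simps:
  "carrier locR = carrier RR.locM" "\<zero>\<^bsub>locR\<^esub> = rfrac \<zero> \<one>"
  "X \<oplus>\<^bsub>locR\<^esub> Y = X \<oplus>\<^bsub>RR.locM\<^esub> Y" "X \<otimes>\<^bsub>locR\<^esub> Y = X \<odot>\<^bsub>RR.locM\<^esub> Y"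
  by (simp_all add: loc_ring_def loc_module_def self_module_simps)

lemma loc_ring_carrierE:
  assumes "A \<in> carrier locR"
  obtains a s where "a \<in> carrier R" "s \<in> S" "A = rfrac a s"
  using assms RR.loc_module_carrierE unfolding loc_ring_simps(1) by (auto simp: self_module_simps)

lemma rfrac_in_carrier: "a \<in> carrier R \<Longrightarrow> s \<in> S \<Longrightarrow> rfrac a s \<in> carrier locR"
  using RR.frac_in_carrier by (simp add: loc_ring_simps self_module_simps)

lemma rfrac_mult:
  "\<lbrakk>a \<in> carrier R; s \<in> S; b \<in> carrier R; t \<in> S\<rbrakk> \<Longrightarrow> rfrac a s \<otimes>\<^bsub>locR\<^esub> rfrac b t = rfrac (a \<otimes> b) (s \<otimes> t)"
  using module_localization.frac_smult[OF self_module_localization, of a s b t] by (simp add: loc_ring_simps self_module_simps)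

lemma rfrac_add:
  "\<lbrakk>a \<in> carrier R; s \<in> S; b \<in> carrier R; t \<in> S\<rbrakk>
   \<Longrightarrow> rfrac a s \<oplus>\<^bsub>locR\<^esub> rfrac b t = rfrac (t \<otimes> a \<oplus> s \<otimes> b) (s \<otimes> t)"
  using RR.frac_add[of a s b t] by (simp add: loc_ring_simps self_module_simps)

lemma rfrac_smult_eq_zero_iff:
  assumes "a \<in> carrier R" "t \<in> S" "x \<in> carrier M" "s \<in> S"
  shows "rfrac a t \<odot>\<^bsub>locM\<^esub> mfrac x s = \<zero>\<^bsub>locM\<^esub> \<longleftrightarrow> (\<exists>u\<in>S. u \<odot>\<^bsub>M\<^esub> (a \<odot>\<^bsub>M\<^esub> x) = \<zero>\<^bsub>M\<^esub>)"
  using assms frac_smult frac_eq_zero_iff S_mult by simp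

lemma loc_ideal_elt_eq_zero_iff:
  assumes J: "ideal J locR" and X: "X \<in> carrier locM"
  shows "ideal_elt locR locM J X = {\<zero>\<^bsub>locM\<^esub>} \<longleftrightarrow> (\<forall>A\<in>J. A \<odot>\<^bsub>locM\<^esub> X = \<zero>\<^bsub>locM\<^esub>)"
proof (rule ideal_elt_eq_zero_iff)
  show "\<zero>\<^bsub>locR\<^esub> \<in> J" using additive_subgroup.zero_closed[OF ideal.axioms(1)[OF J]] .
  obtain x s where "x \<in> carrier M" "s \<in> S" "X = mfrac x s" by (rule loc_module_carrierE[OF X])
  then show "\<zero>\<^bsub>locR\<^esub> \<odot>\<^bsub>locM\<^esub> X = \<zero>\<^bsub>locM\<^esub>"
    using rfrac_smult_eq_zero_iff one_S by (auto simp: loc_ring_simps(2) intro!: bexI[of _ \<one>])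
qed

lemma loc_ideal_mod_eq_zero_iff:
  "ideal_mod locR locM J = {\<zero>\<^bsub>locM\<^esub>} \<longleftrightarrow> (\<forall>A\<in>J. \<forall>Y\<in>carrier locM. A \<odot>\<^bsub>locM\<^esub> Y = \<zero>\<^bsub>locM\<^esub>)"
proof (rule ideal_mod_eq_zero_iff)
  show "B \<odot>\<^bsub>locM\<^esub> \<zero>\<^bsub>locM\<^esub> = \<zero>\<^bsub>locM\<^esub>" if B: "B \<in> carrier locR" for B
  proof -
    obtain b w where "b \<in> carrier R" "w \<in> S" "B = rfrac b w" by (rule loc_ring_carrierE[OF B])
    then show ?thesis
      using rfrac_smult_eq_zero_iff one_S by (auto simp: loc_module_simps(2) intro!: bexI[of _ \<one>])
  qed
  show "\<zero>\<^bsub>locM\<^esub> \<oplus>\<^bsub>locM\<^esub> \<zero>\<^bsub>locM\<^esub> = \<zero>\<^bsub>locM\<^esub>"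
    using frac_add[of "\<zero>\<^bsub>M\<^esub>" \<one> "\<zero>\<^bsub>M\<^esub>" \<one>] one_S by (simp add: loc_module_simps(2))
qed

lemma prime_module_loc:
  assumes pr: "prime_module R M"
  shows "prime_module locR locM"
  unfolding prime_module_def
proof (intro allI impI)
  fix J X assume "ideal J locR \<and> X \<in> carrier locM \<and> ideal_elt locR locM J X = {\<zero>\<^bsub>locM\<^esub>}"
  then have J: "ideal J locR" and X: "X \<in> carrier locM" and JX: "\<forall>A\<in>J. A \<odot>\<^bsub>locM\<^esub> X = \<zero>\<^bsub>locM\<^esub>"
    using loc_ideal_elt_eq_zero_iff by auto
  obtain x s where x: "x \<in> carrier M" "s \<in> S" "X = mfrac x s" by (rule loc_module_carrierE[OF X])
  show "X = \<zero>\<^bsub>locM\<^esub> \<or> ideal_mod locR locM J = {\<zero>\<^bsub>locM\<^esub>}"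
  proof (cases "X = \<zero>\<^bsub>locM\<^esub>")
    case False
    then have nz: "u \<odot>\<^bsub>M\<^esub> x \<noteq> \<zero>\<^bsub>M\<^esub>" if "u \<in> S" for u using frac_eq_zero_iff x that by blast
    have "A \<odot>\<^bsub>locM\<^esub> Y = \<zero>\<^bsub>locM\<^esub>" if A: "A \<in> J" and Y: "Y \<in> carrier locM" for A Y
    proof -
      obtain a t where a: "a \<in> carrier R" "t \<in> S" "A = rfrac a t"
        using loc_ring_carrierE ideal.Icarr[OF J A] by blast
      obtain y v where y: "y \<in> carrier M" "v \<in> S" "Y = mfrac y v" by (rule loc_module_carrierE[OF Y])
      obtain u where u: "u \<in> S" "u \<odot>\<^bsub>M\<^esub> (a \<odot>\<^bsub>M\<^esub> x) = \<zero>\<^bsub>M\<^esub>"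
        using JX A a x rfrac_smult_eq_zero_iff by blast
      then have "a \<odot>\<^bsub>M\<^esub> (u \<odot>\<^bsub>M\<^esub> x) = \<zero>\<^bsub>M\<^esub>" using a x S_carrier M.smult_comm by simp
      then have "a \<odot>\<^bsub>M\<^esub> y = \<zero>\<^bsub>M\<^esub>"
        using M.prime_module_smult_eq_zero[OF pr a(1) _ nz[OF u(1)] _ y(1)] u(1) x S_carrier by simp
      then show ?thesis using rfrac_smult_eq_zero_iff a y one_S
        by (metis M.smult_r_null S_carrier)
    qed
    then show ?thesis using loc_ideal_mod_eq_zero_iff by blast
  qed simp
qed

lemma weakly_prime_module_loc:
  assumes wp: "weakly_prime_module R M"
  shows "weakly_prime_module locR locM"
  unfolding weakly_prime_module_def
proof (intro allI impI)
  fix J K X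
  assume h: "ideal J locR \<and> ideal K locR \<and> X \<in> carrier locM
    \<and> ideal_elt locR locM (ideal_prod locR J K) X = {\<zero>\<^bsub>locM\<^esub>}"
  then have J: "ideal J locR" and K: "ideal K locR" and X: "X \<in> carrier locM" by auto
  have JK: "ideal (ideal_prod locR J K) locR" using ring.ideal_prod_is_ideal[OF ideal.axioms(2)[OF J] J K] .
  have JKX: "\<forall>C\<in>ideal_prod locR J K. C \<odot>\<^bsub>locM\<^esub> X = \<zero>\<^bsub>locM\<^esub>"
    using h loc_ideal_elt_eq_zero_iff[OF JK X] by simp
  obtain x s where x: "x \<in> carrier M" "s \<in> S" "X = mfrac x s" by (rule loc_module_carrierE[OF X])
  show "ideal_elt locR locM J X = {\<zero>\<^bsub>locM\<^esub>} \<or> ideal_elt locR locM K X = {\<zero>\<^bsub>locM\<^esub>}"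
  proof (rule ccontr)
    assume "\<not> ?thesis"
    then obtain A B where A: "A \<in> J" "A \<odot>\<^bsub>locM\<^esub> X \<noteq> \<zero>\<^bsub>locM\<^esub>" and B: "B \<in> K" "B \<odot>\<^bsub>locM\<^esub> X \<noteq> \<zero>\<^bsub>locM\<^esub>"
      using loc_ideal_elt_eq_zero_iff[OF J X] loc_ideal_elt_eq_zero_iff[OF K X] by blast
    obtain a t where a: "a \<in> carrier R" "t \<in> S" "A = rfrac a t"
      using loc_ring_carrierE ideal.Icarr[OF J A(1)] by blast
    obtain b w where b: "b \<in> carrier R" "w \<in> S" "B = rfrac b w"
      using loc_ring_carrierE ideal.Icarr[OF K B(1)] by blast
    have "A \<otimes>\<^bsub>locR\<^esub> B \<in> ideal_prod locR J K" using A(1) B(1) by (rule ideal_prod.prod)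
    then have "rfrac (a \<otimes> b) (t \<otimes> w) \<odot>\<^bsub>locM\<^esub> X = \<zero>\<^bsub>locM\<^esub>" using JKX a b rfrac_mult by auto
    then obtain u where u: "u \<in> S" "u \<odot>\<^bsub>M\<^esub> ((a \<otimes> b) \<odot>\<^bsub>M\<^esub> x) = \<zero>\<^bsub>M\<^esub>"
      using rfrac_smult_eq_zero_iff a b x S_mult by auto
    have uc: "u \<in> carrier R" using u S_carrier by blast
    have "(a \<otimes> b) \<odot>\<^bsub>M\<^esub> (u \<odot>\<^bsub>M\<^esub> x) = \<zero>\<^bsub>M\<^esub>" using u(2) a b uc x M.smult_comm by simp
    then have "a \<odot>\<^bsub>M\<^esub> (u \<odot>\<^bsub>M\<^esub> x) = \<zero>\<^bsub>M\<^esub> \<or> b \<odot>\<^bsub>M\<^esub> (u \<odot>\<^bsub>M\<^esub> x) = \<zero>\<^bsub>M\<^esub>"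
      using M.weakly_prime_module_smult[OF wp a(1) b(1)] uc x by simp
    then have "u \<odot>\<^bsub>M\<^esub> (a \<odot>\<^bsub>M\<^esub> x) = \<zero>\<^bsub>M\<^esub> \<or> u \<odot>\<^bsub>M\<^esub> (b \<odot>\<^bsub>M\<^esub> x) = \<zero>\<^bsub>M\<^esub>"
      using M.smult_comm[of a u x] M.smult_comm[of b u x] a b uc x by simp
    then show False
      using A(2) B(2) a b x u(1) rfrac_smult_eq_zero_iff[of a t x s] rfrac_smult_eq_zero_iff[of b w x s]
      by blast
  qed
qed

end

definition contraction :: "'a ring \<Rightarrow> 'a set \<Rightarrow> ('a \<times> 'a) set set \<Rightarrow> 'a set" where
  "contraction R S L = {a \<in> carrier R. loc_cls R S (self_module R) a \<one>\<^bsub>R\<^esub> \<in> L}"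

context module_localization
begin

lemma rfrac_cancel: "a \<in> carrier R \<Longrightarrow> t \<in> S \<Longrightarrow> rfrac t \<one> \<otimes>\<^bsub>locR\<^esub> rfrac a t = rfrac a \<one>"
  using rfrac_mult[of t \<one> a t] RR.frac_eq_iff[of "t \<otimes> a" "\<one> \<otimes> t" a \<one>] one_S S_carrier
  by (auto simp: RR_frac_eq_iff self_module_simps m_ac intro!: bexI[of _ \<one>])

lemma contraction_sub: "contraction R S L \<subseteq> carrier R"
  unfolding contraction_def by blast

lemma ideal_loc_elem:
  assumes L: "ideal L locR" and A: "A \<in> L"
  obtains a t where "a \<in> contraction R S L" "t \<in> S" "A = rfrac a t"
proof -
  obtain a t where a: "a \<in> carrier R" "t \<in> S" "A = rfrac a t"
    using loc_ring_carrierE ideal.Icarr[OF L A] by blast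
  have "rfrac t \<one> \<otimes>\<^bsub>locR\<^esub> A \<in> L"
    using ideal.I_l_closed[OF L A] rfrac_in_carrier a S_carrier one_S by blast
  then have "a \<in> contraction R S L" using rfrac_cancel a unfolding contraction_def by simp
  then show ?thesis using that a by blast
qed

lemma contraction_ideal:
  assumes L: "ideal L locR"
  shows "ideal (contraction R S L) R"
proof (rule idealI_smult)
  show "\<zero> \<in> contraction R S L"
    using additive_subgroup.zero_closed[OF ideal.axioms(1)[OF L]] unfolding contraction_def
    by (simp add: loc_ring_simps(2))
  show "a \<oplus> b \<in> contraction R S L" if ab: "a \<in> contraction R S L" "b \<in> contraction R S L" for a b
  proof -
    have "rfrac a \<one> \<oplus>\<^bsub>locR\<^esub> rfrac b \<one> \<in> L"
      using ab additive_subgroup.a_closed[OF ideal.axioms(1)[OF L]] unfolding contraction_def by blast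
    then show ?thesis using ab rfrac_add[of a \<one> b \<one>] one_S unfolding contraction_def by simp
  qed
  show "x \<otimes> a \<in> contraction R S L" if ax: "a \<in> contraction R S L" "x \<in> carrier R" for a x
  proof -
    have "rfrac x \<one> \<otimes>\<^bsub>locR\<^esub> rfrac a \<one> \<in> L"
      using ax ideal.I_l_closed[OF L] rfrac_in_carrier one_S unfolding contraction_def by blast
    then show ?thesis using ax rfrac_mult[of x \<one> a \<one>] one_S unfolding contraction_def by simp
  qed
qed (rule contraction_sub)

lemma frac_add_same_denom:
  assumes "y1 \<in> carrier M" "y2 \<in> carrier M" "v \<in> S"
  shows "mfrac y1 v \<oplus>\<^bsub>locM\<^esub> mfrac y2 v = mfrac (y1 \<oplus>\<^bsub>M\<^esub> y2) v"
proof -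
  have vc: "v \<in> carrier R" using assms S_carrier by blast
  have "frac_eq (v \<odot>\<^bsub>M\<^esub> y1 \<oplus>\<^bsub>M\<^esub> v \<odot>\<^bsub>M\<^esub> y2) (v \<otimes> v) (y1 \<oplus>\<^bsub>M\<^esub> y2) v"
    unfolding frac_eq_def using one_S assms vc
    by (intro bexI[of _ \<one>]) (simp_all add: M.smult_r_distr M.smult_assoc1)
  then show ?thesis using frac_add frac_eq_iff assms vc S_mult by simp
qed

lemma ideal_mod_loc_subset:
  assumes L: "ideal L locR"
  shows "ideal_mod locR locM L \<subseteq> {mfrac y v | y v. y \<in> ideal_mod R M (contraction R S L) \<and> v \<in> S}"
    (is "_ \<subseteq> ?F")
  unfolding ideal_mod_def[of locR]
proof (rule gen_submod_least)
  have sub: "ideal_mod R M (contraction R S L) \<subseteq> carrier M"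
    by (rule M.ideal_mod_subset_carrier[OF contraction_sub])
  show "\<zero>\<^bsub>locM\<^esub> \<in> ?F" using ideal_mod_closed(1) one_S unfolding loc_module_simps by blast
  show "{A \<odot>\<^bsub>locM\<^esub> Y | A Y. A \<in> L \<and> Y \<in> carrier locM} \<subseteq> ?F"
  proof clarify
    fix A Y assume A: "A \<in> L" and Y: "Y \<in> carrier locM"
    obtain a t where a: "a \<in> contraction R S L" "t \<in> S" "A = rfrac a t" by (rule ideal_loc_elem[OF L A])
    obtain y v where y: "y \<in> carrier M" "v \<in> S" "Y = mfrac y v" by (rule loc_module_carrierE[OF Y])
    have "a \<in> carrier R" using a(1) contraction_sub by blast
    then have "A \<odot>\<^bsub>locM\<^esub> Y = mfrac (a \<odot>\<^bsub>M\<^esub> y) (t \<otimes> v)" using a(2,3) y frac_smult by simp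
    moreover have "a \<odot>\<^bsub>M\<^esub> y \<in> ideal_mod R M (contraction R S L)" by (rule smult_in_ideal_mod[OF a(1) y(1)])
    ultimately show "\<exists>y v. A \<odot>\<^bsub>locM\<^esub> Y = mfrac y v \<and> y \<in> ideal_mod R M (contraction R S L) \<and> v \<in> S"
      using a(2) y(2) S_mult by blast
  qed
  show "B \<odot>\<^bsub>locM\<^esub> Z \<in> ?F" if B: "B \<in> carrier locR" and Z: "Z \<in> ?F" for B Z
  proof -
    obtain b w where b: "b \<in> carrier R" "w \<in> S" "B = rfrac b w" by (rule loc_ring_carrierE[OF B])
    obtain y v where y: "y \<in> ideal_mod R M (contraction R S L)" "v \<in> S" "Z = mfrac y v" using Z by blast
    have "y \<in> carrier M" using y(1) sub by blast
    then have "B \<odot>\<^bsub>locM\<^esub> Z = mfrac (b \<odot>\<^bsub>M\<^esub> y) (w \<otimes> v)" using b y(2,3) frac_smult by simp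
    then show ?thesis using ideal_mod_closed(2)[OF b(1) y(1)] b(2) y(2) S_mult by blast
  qed
  show "Z1 \<oplus>\<^bsub>locM\<^esub> Z2 \<in> ?F" if Z1: "Z1 \<in> ?F" and Z2: "Z2 \<in> ?F" for Z1 Z2
  proof -
    obtain y v where y: "y \<in> ideal_mod R M (contraction R S L)" "v \<in> S" "Z1 = mfrac y v" using Z1 by blast
    obtain y' v' where y': "y' \<in> ideal_mod R M (contraction R S L)" "v' \<in> S" "Z2 = mfrac y' v'"
      using Z2 by blast
    have "y \<in> carrier M" "y' \<in> carrier M" using y(1) y'(1) sub by auto
    then have "Z1 \<oplus>\<^bsub>locM\<^esub> Z2 = mfrac (v' \<odot>\<^bsub>M\<^esub> y \<oplus>\<^bsub>M\<^esub> v \<odot>\<^bsub>M\<^esub> y') (v \<otimes> v')"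
      using y(2,3) y'(2,3) frac_add by simp
    moreover have "v' \<odot>\<^bsub>M\<^esub> y \<oplus>\<^bsub>M\<^esub> v \<odot>\<^bsub>M\<^esub> y' \<in> ideal_mod R M (contraction R S L)"
      using ideal_mod_closed y y' S_carrier by metis
    ultimately show ?thesis using y(2) y'(2) S_mult by blast
  qed
qed

lemma frac_in_ideal_mod_loc:
  assumes L: "ideal L locR" and y: "y \<in> ideal_mod R M (contraction R S L)"
  shows "\<forall>v\<in>S. mfrac y v \<in> ideal_mod locR locM L"
  using y[unfolded ideal_mod_def]
proof induction
  case zero
  then show ?case using frac_zero ideal_mod_closed(1)[of locM locR L] by simp
next
  case (incl x)
  then obtain a m where am: "a \<in> contraction R S L" "m \<in> carrier M" "x = a \<odot>\<^bsub>M\<^esub> m" by blast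
  have "a \<in> carrier R" using am(1) contraction_sub by blast
  then have "mfrac x v = rfrac a \<one> \<odot>\<^bsub>locM\<^esub> mfrac m v" if "v \<in> S" for v
    using am(2,3) that one_S frac_smult S_carrier by simp
  moreover have "rfrac a \<one> \<in> L" using am(1) unfolding contraction_def by simp
  ultimately show ?case using smult_in_ideal_mod frac_in_carrier am(2) by metis
next
  case (smult b x)
  have "x \<in> carrier M"
    using smult.hyps(2) M.ideal_mod_subset_carrier[OF contraction_sub] unfolding ideal_mod_def by blast
  then have "mfrac (b \<odot>\<^bsub>M\<^esub> x) v = rfrac b \<one> \<odot>\<^bsub>locM\<^esub> mfrac x v" if "v \<in> S" for v
    using smult.hyps(1) that one_S frac_smult S_carrier by auto
  then show ?case using ideal_mod_closed(2) smult.IH rfrac_in_carrier smult.hyps(1) one_S by metis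
next
  case (add x y)
  have "x \<in> carrier M" "y \<in> carrier M"
    using add.hyps(1,2) M.ideal_mod_subset_carrier[OF contraction_sub] unfolding ideal_mod_def by blast+
  then show ?case using frac_add_same_denom ideal_mod_closed(3) add.IH by metis
qed

lemma ideal_mod_loc:
  assumes L: "ideal L locR"
  shows "ideal_mod locR locM L = {mfrac y v | y v. y \<in> ideal_mod R M (contraction R S L) \<and> v \<in> S}"
  using ideal_mod_loc_subset[OF L] frac_in_ideal_mod_loc[OF L] by blast

lemma coprime_module_loc:
  assumes cp: "coprime_module R M"
  shows "coprime_module locR locM"
  unfolding coprime_module_def
proof (intro allI impI)
  fix J assume J: "ideal J locR"
  consider "ideal_mod R M (contraction R S J) = {\<zero>\<^bsub>M\<^esub>}"
    | "ideal_mod R M (contraction R S J) = carrier M"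
    using cp contraction_ideal[OF J] unfolding coprime_module_def by blast
  then show "ideal_mod locR locM J = {\<zero>\<^bsub>locM\<^esub>} \<or> ideal_mod locR locM J = carrier locM"
  proof cases
    case 1
    have "ideal_mod locR locM J = {\<zero>\<^bsub>locM\<^esub>}"
    proof
      show "ideal_mod locR locM J \<subseteq> {\<zero>\<^bsub>locM\<^esub>}" unfolding ideal_mod_loc[OF J] 1 using frac_zero by auto
      show "{\<zero>\<^bsub>locM\<^esub>} \<subseteq> ideal_mod locR locM J" using ideal_mod_closed(1)[of locM locR J] by simp
    qed
    then show ?thesis ..
  next
    case 2
    then have "ideal_mod locR locM J = carrier locM"
      unfolding ideal_mod_loc[OF J] loc_module_simps loc_carrier_def by blast
    then show ?thesis by blast
  qed
qed

lemma contraction_ideal_prod_subset: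
  assumes J: "ideal J locR" and K: "ideal K locR"
  shows "ideal_prod R (contraction R S J) (contraction R S K) \<subseteq> contraction R S (ideal_prod locR J K)"
proof
  fix c assume "c \<in> ideal_prod R (contraction R S J) (contraction R S K)"
  then show "c \<in> contraction R S (ideal_prod locR J K)"
  proof induction
    case (prod i j)
    have c: "i \<in> carrier R" "j \<in> carrier R" using prod contraction_sub by auto
    have "rfrac i \<one> \<otimes>\<^bsub>locR\<^esub> rfrac j \<one> \<in> ideal_prod locR J K"
      using prod unfolding contraction_def by (blast intro: ideal_prod.prod)
    then show ?case using rfrac_mult[of i \<one> j \<one>] c one_S unfolding contraction_def by simp
  next
    case (sum s1 s2)
    have c: "s1 \<in> carrier R" "s2 \<in> carrier R" using sum contraction_sub by auto
    have "rfrac s1 \<one> \<oplus>\<^bsub>locR\<^esub> rfrac s2 \<one> \<in> ideal_prod locR J K"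
      using sum unfolding contraction_def by (blast intro: ideal_prod.sum)
    then show ?case using rfrac_add[of s1 \<one> s2 \<one>] c one_S unfolding contraction_def by simp
  qed
qed

lemma weakly_coprime_module_loc:
  assumes wc: "weakly_coprime_module R M"
  shows "weakly_coprime_module locR locM"
  unfolding weakly_coprime_module_def
proof (intro allI impI)
  fix J K assume "ideal J locR \<and> ideal K locR"
  then have J: "ideal J locR" and K: "ideal K locR" by auto
  let ?L = "ideal_prod locR J K" and ?c = "contraction R S"
  have ringL: "ring locR" using ideal.axioms(2)[OF J] .
  have L: "ideal ?L locR" by (rule ring.ideal_prod_is_ideal[OF ringL J K])
  have "?c ?L \<subseteq> ?c J" "?c ?L \<subseteq> ?c K"
    using ring.ideal_prod_inter[OF ringL J K] unfolding contraction_def by auto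
  then have mono: "ideal_mod R M (?c ?L) \<subseteq> ideal_mod R M (?c J)" "ideal_mod R M (?c ?L) \<subseteq> ideal_mod R M (?c K)"
    by (simp_all add: ideal_mod_mono)
  have prod: "ideal_mod R M (ideal_prod R (?c J) (?c K)) \<subseteq> ideal_mod R M (?c ?L)"
    by (rule ideal_mod_mono[OF contraction_ideal_prod_subset[OF J K]])
  have "ideal_mod R M (ideal_prod R (?c J) (?c K)) = ideal_mod R M (?c J)
    \<or> ideal_mod R M (ideal_prod R (?c J) (?c K)) = ideal_mod R M (?c K)"
    using wc contraction_ideal[OF J] contraction_ideal[OF K] unfolding weakly_coprime_module_def by blast
  then have "ideal_mod R M (?c ?L) = ideal_mod R M (?c J) \<or> ideal_mod R M (?c ?L) = ideal_mod R M (?c K)"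
    using mono prod by blast
  then show "ideal_mod locR locM ?L = ideal_mod locR locM J \<or> ideal_mod locR locM ?L = ideal_mod locR locM K"
    unfolding ideal_mod_loc[OF L] ideal_mod_loc[OF J] ideal_mod_loc[OF K] by (elim disjE) simp_all
qed

end

theorem mainTheorem9:
  fixes R :: "'r ring"
  assumes "cring R"
  shows
   \<comment> \<open>(1)\<close>
   "(\<forall>(M :: ('r, 'm) module) (N :: ('r, 'n) module).
       module R M \<and> module R N \<and> coprime_module R M
       \<longrightarrow> prime_module R (hom_module R M N))
    \<and> (\<forall>(M :: ('r, 'm) module) (N :: ('r, 'n) module).
       module R M \<and> module R N \<and> injective_module R N \<and> cogenerator_module R N
       \<and> prime_module R (hom_module R M N)
       \<longrightarrow> coprime_module R M)
   \<comment> \<open>(2)\<close>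
    \<and> (noetherian_ring R \<longrightarrow>
       (\<forall>(M :: ('r, 'm) module) (N :: ('r, 'n) module).
         module R M \<and> module R N \<and> injective_module R N \<and> cogenerator_module R N
         \<and> prime_module R M
         \<longrightarrow> coprime_module R (hom_module R M N)))
   \<comment> \<open>(3)\<close>
    \<and> (\<forall>(M :: ('r, 'm) module) P. module R M \<and> primeideal P R \<longrightarrow>
         (prime_module R M \<longrightarrow> prime_module (loc_ring_at R P) (loc_module_at R P M))
       \<and> (weakly_prime_module R M \<longrightarrow> weakly_prime_module (loc_ring_at R P) (loc_module_at R P M))
       \<and> (coprime_module R M \<longrightarrow> coprime_module (loc_ring_at R P) (loc_module_at R P M))
       \<and> (weakly_coprime_module R M \<longrightarrow> weakly_coprime_module (loc_ring_at R P) (loc_module_at R P M)))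
   \<comment> \<open>(4)\<close>
    \<and> (\<forall>(N :: ('r, 'n) module). module R N \<and> injective_module R N \<and> cogenerator_module R N \<longrightarrow>
         (reduced_module R N \<longrightarrow> coreduced_module R N)
       \<and> (weakly_prime_module R N \<longrightarrow> weakly_coprime_module R N))
   \<comment> \<open>(5)\<close>
    \<and> (\<forall>(Q :: ('r, 'm) module). module R Q \<and> progenerator_module R Q \<longrightarrow>
         (coreduced_module R Q \<longrightarrow> reduced_module R Q)
       \<and> (weakly_coprime_module R Q \<longrightarrow> weakly_prime_module R Q))"
proof -
  interpret cring_rec R using assms by (simp add: cring_rec_def)
  have loc: "module_localization R (carrier R - P) M" if "module R M" "primeideal P R"
    for M :: "('r, 'm) module" and P
    using that by (intro module_localization.intro localization_at_prime module_recI)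
  show ?thesis
  proof (intro conjI allI impI; (elim conjE)?)
    fix M Q :: "('r, 'm) module" and N :: "('r, 'n) module" and P
    show "prime_module R (hom_module R M N)" if "module R M" "module R N" "coprime_module R M"
      using that by (rule module_rec.prime_hom_module_of_coprime[OF module_recI])
    show "coprime_module R M" if "module R M" "module R N" "injective_module R N"
      "cogenerator_module R N" "prime_module R (hom_module R M N)"
      using that by (rule module_rec.coprime_of_prime_hom_module[OF module_recI])
    show "coprime_module R (hom_module R M N)" if "module R M" "module R N" "injective_module R N"
      "cogenerator_module R N" "prime_module R M"
      using that(1,2,3,5) by (rule module_rec.coprime_hom_module_of_prime[OF module_recI])
    show "prime_module (loc_ring_at R P) (loc_module_at R P M)"
      if "module R M" "primeideal P R" "prime_module R M"
      using that(3) by (rule module_localization.prime_module_loc[OF loc[OF that(1,2)]])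
    show "weakly_prime_module (loc_ring_at R P) (loc_module_at R P M)"
      if "module R M" "primeideal P R" "weakly_prime_module R M"
      using that(3) by (rule module_localization.weakly_prime_module_loc[OF loc[OF that(1,2)]])
    show "coprime_module (loc_ring_at R P) (loc_module_at R P M)"
      if "module R M" "primeideal P R" "coprime_module R M"
      using that(3) by (rule module_localization.coprime_module_loc[OF loc[OF that(1,2)]])
    show "weakly_coprime_module (loc_ring_at R P) (loc_module_at R P M)"
      if "module R M" "primeideal P R" "weakly_coprime_module R M"
      using that(3) by (rule module_localization.weakly_coprime_module_loc[OF loc[OF that(1,2)]])
    show "coreduced_module R N"
      if "module R N" "injective_module R N" "cogenerator_module R N" "reduced_module R N"
      using that(1,3,4) by (rule coreduced_of_reduced_cogenerator)
    show "weakly_coprime_module R N"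
      if "module R N" "injective_module R N" "cogenerator_module R N" "weakly_prime_module R N"
      using that(1,3,4) by (rule weakly_coprime_of_weakly_prime_cogenerator)
    show "reduced_module R Q" if "module R Q" "progenerator_module R Q" "coreduced_module R Q"
      using that by (intro module_rec.reduced_of_coreduced_generator module_recI)
        (simp_all add: progenerator_module_def)
    show "weakly_prime_module R Q" if "module R Q" "progenerator_module R Q" "weakly_coprime_module R Q"
      using that by (intro module_rec.weakly_prime_of_weakly_coprime_generator module_recI)
        (simp_all add: progenerator_module_def)
  qed
qed

end
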